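(* Let $f$ be a real function on $[0,1]$ satisfying the H\"older condition $|f(x')-f(x'')|\le H|x'-x''|^{1/N}$ for all $x',x''\in[0,1]$, with $H>0$ and integer $N\ge 1$. Apply the algorithm PLT (described in the context) to $f$, with the stopping rule disregarded, and let $\{x^q\}$ be the resulting infinite sequence of trial points. Assume that the numbers of parallel trials satisfy $p(l)\le Q<\infty$ for all $l>1$. Let $\bar x\in[0,1]$ be a limit point of $\{x^q\}$. Then: (i) if $\bar x\in(0,1)$, there exist two subsequences of $\{x^q\}$, one converging to $\bar x$ from the left and the other converging to $\bar x$ from the right; (ii) if $f$ has a finite number of local extrema, then $\bar x$ is a local minimizer of $f$; (iii) if $\hat x$ is another limit point of $\{x^q\}$, then $f(\bar x)=f(\hat x)$; (iv) for all $q\ge 1$, $z^q=f(x^q)\ge f(\bar x)$.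
   Context: Algorithm PLT (parallel information algorithm with local tuning) for minimizing $f$ on $[0,1]$; parameters: integer $N\ge1$, reliability parameter $r>1$, small number $\xi>0$. A "trial" is an evaluation of $f$ at a point. Step 0: perform $q(1)>1$ initial trials at $x^1=0$, $x^2=1$ and some interior points $x^3,\dots,x^{q(1)}\in(0,1)$; set $l=1$. At iteration $l$, let $q=q(l)$ be the number of trials made so far. Step 1: order all trial points as $0=x_1<x_2<\dots<x_q=1$ and set $z_i=f(x_i)$. Step 2: for $2\le j\le q$ compute $\mu_j=\max\{\lambda_j,\gamma_j,\xi\}$, where $\lambda_j=\max\{|z_i-z_{i-1}|/(x_i-x_{i-1})^{1/N}: i\in I_j\}$ with $I_2=\{2,3\}$, $I_j=\{j-1,j,j+1\}$ for $3\le j\le q-1$, $I_q=\{q-1,q\}$; and $\gamma_j=\mu\,(x_j-x_{j-1})^{1/N}/(X^{\max})^{1/N}$ with $\mu=\max\{|z_i-z_{i-1}|/(x_i-x_{i-1})^{1/N}:2\le i\le q\}$ and $X^{\max}=\max\{x_i-x_{i-1}:2\le i\le q\}$. Step 3: for $2\le j\le q$ compute the characteristic $R(j)=r\mu_j(x_j-x_{j-1})^{1/N}+\frac{(z_j-z_{j-1})^2}{r\mu_j(x_j-x_{j-1})^{1/N}}-(z_j+z_{j-1})$. Step 4: choose $p=p(l+1)\le q(l)-1$ and distinct indices $t_1,\dots,t_p$ being the indices of the $p$ largest characteristics ($t_1=\arg\max\{R(i):1<i\le q\}$, $t_k=\arg\max\{R(i):1<i\le q,\ i\ne t_s, 1\le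 s\le k-1\}$); the new trial points are $x^{q+k}=\tfrac12(x_{t_k-1}+x_{t_k})-\frac{1}{2r}\left(\frac{|z_{t_k}-z_{t_k-1}|}{\mu_{t_k}}\right)^N\operatorname{sign}(z_{t_k}-z_{t_k-1})$, $1\le k\le p$. Step 5: evaluate $f$ at these $p$ points in parallel, set $q(l+1)=q(l)+p(l+1)$, $l\leftarrow l+1$, and return to Step 1. (In the paper $f(x)=\phi(y(x))$ where $y$ is a Peano-type space-filling curve mapping $[0,1]$ onto a hyperinterval $D\subset\mathbb R^N$ and $\phi$ is Lipschitz on $D$, which yields the H\"older condition above.) *)

theory Defs
  imports Complex_Main
begin

text \<open>Trial points made so far are X 1, ..., X q.  The ordered points
  0 = x_1 < ... < x_q = 1 are given (1-based) by plt_x.\<close>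

definition plt_x :: "(nat \<Rightarrow> real) \<Rightarrow> nat \<Rightarrow> nat \<Rightarrow> real" where
  "plt_x X q i = sorted_list_of_set (X ` {1..q}) ! (i - 1)"

definition plt_z :: "(real \<Rightarrow> real) \<Rightarrow> (nat \<Rightarrow> real) \<Rightarrow> nat \<Rightarrow> nat \<Rightarrow> real" where
  "plt_z f X q i = f (plt_x X q i)"

definition plt_d :: "nat \<Rightarrow> (nat \<Rightarrow> real) \<Rightarrow> nat \<Rightarrow> nat \<Rightarrow> real" where
  "plt_d N X q i = (plt_x X q i - plt_x X q (i - 1)) powr (1 / real N)"

definition plt_slope :: "(real \<Rightarrow> real) \<Rightarrow> nat \<Rightarrow> (nat \<Rightarrow> real) \<Rightarrow> nat \<Rightarrow> nat \<Rightarrow> real" where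
  "plt_slope f N X q i = \<bar>plt_z f X q i - plt_z f X q (i - 1)\<bar> / plt_d N X q i"

text \<open>lambda_j, with I_j = {j-1, j, j+1} \<inter> {2..q} (this gives I_2 = {2,3},
  I_q = {q-1,q} and I_j = {j-1,j,j+1} otherwise).\<close>
definition plt_lambda :: "(real \<Rightarrow> real) \<Rightarrow> nat \<Rightarrow> (nat \<Rightarrow> real) \<Rightarrow> nat \<Rightarrow> nat \<Rightarrow> real" where
  "plt_lambda f N X q j = Max (plt_slope f N X q ` ({j - 1..j + 1} \<inter> {2..q}))"

definition plt_mu_glob :: "(real \<Rightarrow> real) \<Rightarrow> nat \<Rightarrow> (nat \<Rightarrow> real) \<Rightarrow> nat \<Rightarrow> real" where
  "plt_mu_glob f N X q = Max (plt_slope f N X q ` {2..q})"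

definition plt_Xmax :: "(nat \<Rightarrow> real) \<Rightarrow> nat \<Rightarrow> real" where
  "plt_Xmax X q = Max ((\<lambda>i. plt_x X q i - plt_x X q (i - 1)) ` {2..q})"

definition plt_gamma :: "(real \<Rightarrow> real) \<Rightarrow> nat \<Rightarrow> (nat \<Rightarrow> real) \<Rightarrow> nat \<Rightarrow> nat \<Rightarrow> real" where
  "plt_gamma f N X q j =
     plt_mu_glob f N X q * plt_d N X q j / (plt_Xmax X q) powr (1 / real N)"

definition plt_mu :: "(real \<Rightarrow> real) \<Rightarrow> nat \<Rightarrow> real \<Rightarrow> (nat \<Rightarrow> real) \<Rightarrow> nat \<Rightarrow> nat \<Rightarrow> real" where
  "plt_mu f N \<xi> X q j = max (plt_lambda f N X q j) (max (plt_gamma f N X q j) \<xi>)"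

definition plt_R :: "(real \<Rightarrow> real) \<Rightarrow> nat \<Rightarrow> real \<Rightarrow> real \<Rightarrow> (nat \<Rightarrow> real) \<Rightarrow> nat \<Rightarrow> nat \<Rightarrow> real" where
  "plt_R f N r \<xi> X q j =
     (let m = r * plt_mu f N \<xi> X q j * plt_d N X q j;
          zj = plt_z f X q j; zj1 = plt_z f X q (j - 1)
      in m + (zj - zj1)\<^sup>2 / m - (zj + zj1))"

definition plt_new :: "(real \<Rightarrow> real) \<Rightarrow> nat \<Rightarrow> real \<Rightarrow> real \<Rightarrow> (nat \<Rightarrow> real) \<Rightarrow> nat \<Rightarrow> nat \<Rightarrow> real" where
  "plt_new f N r \<xi> X q t =
     (plt_x X q (t - 1) + plt_x X q t) / 2
     - (1 / (2 * r)) * (\<bar>plt_z f X q t - plt_z f X q (t - 1)\<bar> / plt_mu f N \<xi> X q t) ^ N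
       * sgn (plt_z f X q t - plt_z f X q (t - 1))"

text \<open>X is a sequence of trial points (indices 1,2,...) generated by PLT
  (stopping rule disregarded), q l = number of trials after iteration l,
  p l = number of parallel trials at iteration l (l \<ge> 2).  Ties in the
  choice of the largest characteristics are broken arbitrarily.\<close>
definition PLT_run ::
  "(real \<Rightarrow> real) \<Rightarrow> nat \<Rightarrow> real \<Rightarrow> real \<Rightarrow> (nat \<Rightarrow> real) \<Rightarrow> (nat \<Rightarrow> nat) \<Rightarrow> (nat \<Rightarrow> nat) \<Rightarrow> bool" where
  "PLT_run f N r \<xi> X q p \<longleftrightarrow>
     q 1 > 1 \<and> X 1 = 0 \<and> X 2 = 1 \<and> (\<forall>i\<in>{3..q 1}. 0 < X i \<and> X i < 1) \<and>
     inj_on X {1..q 1} \<and>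
     (\<forall>l\<ge>1. 1 \<le> p (l + 1) \<and> p (l + 1) \<le> q l - 1 \<and> q (l + 1) = q l + p (l + 1) \<and>
        (\<exists>t :: nat \<Rightarrow> nat.
           inj_on t {1..p (l + 1)} \<and> t ` {1..p (l + 1)} \<subseteq> {2..q l} \<and>
           (\<forall>k\<in>{1..p (l + 1)}. \<forall>k'\<in>{1..p (l + 1)}. k < k' \<longrightarrow>
               plt_R f N r \<xi> X (q l) (t k') \<le> plt_R f N r \<xi> X (q l) (t k)) \<and>
           (\<forall>k\<in>{1..p (l + 1)}. \<forall>j\<in>{2..q l} - t ` {1..p (l + 1)}.
               plt_R f N r \<xi> X (q l) j \<le> plt_R f N r \<xi> X (q l) (t k)) \<and>
           (\<forall>k\<in>{1..p (l + 1)}. X (q l + k) = plt_new f N r \<xi> X (q l) (t k))))"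

definition seq_limit_point :: "(nat \<Rightarrow> real) \<Rightarrow> real \<Rightarrow> bool" where
  "seq_limit_point X a \<longleftrightarrow>
     (\<exists>\<sigma>. strict_mono \<sigma> \<and> (\<forall>n. \<sigma> n \<ge> 1) \<and> (\<lambda>n. X (\<sigma> n)) \<longlonglongrightarrow> a)"

definition loc_min_01 :: "(real \<Rightarrow> real) \<Rightarrow> real \<Rightarrow> bool" where
  "loc_min_01 f x \<longleftrightarrow> x \<in> {0..1} \<and>
     (\<exists>\<delta>>0. \<forall>y\<in>{0..1}. \<bar>y - x\<bar> < \<delta> \<longrightarrow> f x \<le> f y)"

definition loc_max_01 :: "(real \<Rightarrow> real) \<Rightarrow> real \<Rightarrow> bool" where
  "loc_max_01 f x \<longleftrightarrow> x \<in> {0..1} \<and>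
     (\<exists>\<delta>>0. \<forall>y\<in>{0..1}. \<bar>y - x\<bar> < \<delta> \<longrightarrow> f y \<le> f x)"

end

theory Submission
  imports Defs
begin

text \<open>The proof separates the combinatorics of the algorithm from its formulas.  First an
  abstract interval-refinement scheme is described by a locale: growing finite point sets
  S l in [0,1], at most Q chosen neighbouring intervals per step, a characteristic
  squeezed between kappa1 d^(1/N) - 2 min f and K2 d^(1/N) - 2 min f (d the interval
  length), maximality of the chosen characteristics, and new points in the central part of
  the chosen intervals.  For a limit point xb, small chosen intervals near xb show that
  infinitely often some chosen characteristic is close to -2 f(xb).  From this:
  (iv) a point p0 with f p0 < f xb would have all intervals around its sublevel set chosen
  infinitely often, so points accumulate there beyond what Q chosen intervals allow;
  (i) a bracket of width >= eps around xb would be chosen and contracted by a fixed factor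
  infinitely often, so points approach xb from both sides.
  Then PLT is shown to be an instance (sorted trial points, estimates for mu_j, R(j) and the
  new point), and the theorem follows: (iii) from (iv) and continuity, (ii) from (i), (iv)
  and the fact that a non-minimum surrounded by higher values encloses a local maximum.\<close>

lemma root_less_of_less_pow:
  fixes t \<theta> :: real
  assumes N: "N \<ge> 1" and t: "0 \<le> t" and \<theta>: "\<theta> > 0" and lt: "t < \<theta> ^ N"
  shows "t powr (1 / real N) < \<theta>"
proof -
  have "t powr (1 / real N) < (\<theta> ^ N) powr (1 / real N)"
    using N t lt by (intro powr_less_mono2) auto
  also have "(\<theta> ^ N) powr (1 / real N) = \<theta>"
    using N \<theta> by (simp add: powr_realpow[symmetric] powr_powr)
  finally show ?thesis .
qed

lemma root_pow_cancel:
  fixes x :: real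
  assumes "N \<ge> 1" and "x > 0"
  shows "(x powr (1 / real N)) ^ N = x"
  using assms by (simp add: powr_realpow[symmetric] powr_powr)

lemma eventually_small_of_frequent_contraction:
  fixes g :: "nat \<Rightarrow> real" and c \<delta> :: real
  assumes anti: "\<And>l. g (Suc l) \<le> g l" and le1: "\<And>l. g l \<le> 1"
    and c: "0 \<le> c" "c < 1" and contr: "\<And>L. \<exists>l\<ge>L. g (Suc l) \<le> c * g l"
    and \<delta>: "\<delta> > 0"
  shows "\<exists>L. \<forall>l\<ge>L. g l < \<delta>"
proof -
  have decay: "\<exists>L. \<forall>l\<ge>L. g l \<le> c ^ n" for n
  proof (induction n)
    case 0 show ?case using le1 by auto
  next
    case (Suc n)
    then obtain L where L: "\<forall>l\<ge>L. g l \<le> c ^ n" by blast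
    obtain l where l: "l \<ge> L" "g (Suc l) \<le> c * g l" using contr by blast
    have "c * g l \<le> c * c ^ n" using L l(1) c(1) by (intro mult_left_mono) auto
    hence "g (Suc l) \<le> c ^ Suc n" using l(2) by simp
    hence "\<forall>l'\<ge>Suc l. g l' \<le> c ^ Suc n"
      using lift_Suc_antimono_le[of g, OF anti] order_trans by blast
    thus ?case by blast
  qed
  obtain n where "c ^ n < \<delta>" using real_arch_pow_inv[OF \<delta> c(2)] by blast
  thus ?thesis using decay[of n] by (meson order_le_less_trans)
qed

lemma unbounded_of_frequent_increase:
  fixes c :: "nat \<Rightarrow> nat"
  assumes mono: "\<And>l. c l \<le> c (Suc l)" and inc: "\<And>L. \<exists>l\<ge>L. c l < c (Suc l)"
  shows "\<exists>L. \<forall>l\<ge>L. m \<le> c l"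
proof (induction m)
  case 0 show ?case by simp
next
  case (Suc m)
  then obtain L where L: "\<forall>l\<ge>L. m \<le> c l" by blast
  obtain l where "l \<ge> L" "c l < c (Suc l)" using inc by blast
  hence "Suc m \<le> c (Suc l)" using L by fastforce
  hence "\<forall>l'\<ge>Suc l. Suc m \<le> c l'" using lift_Suc_mono_le[of c, OF mono] order_trans by blast
  thus ?case by blast
qed

definition consec :: "real set \<Rightarrow> real \<Rightarrow> real \<Rightarrow> bool" where
  "consec S u v \<longleftrightarrow> u \<in> S \<and> v \<in> S \<and> u < v \<and> (\<forall>w\<in>S. \<not> (u < w \<and> w < v))"

lemma consec_outside:
  assumes "consec S u v" and "w \<in> S"
  shows "w \<le> u \<or> v \<le> w"
  using assms by (auto simp: consec_def)

lemma split_consec: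
  fixes T :: "real set"
  assumes fin: "finite T" and dc: "\<And>s t. P t \<Longrightarrow> s \<le> t \<Longrightarrow> P s"
    and ne1: "{s \<in> T. P s} \<noteq> {}" and ne2: "{s \<in> T. \<not> P s} \<noteq> {}"
  shows "consec T (Max {s \<in> T. P s}) (Min {s \<in> T. \<not> P s})"
proof -
  have fin': "finite {s \<in> T. P s}" "finite {s \<in> T. \<not> P s}" using fin by auto
  have a: "Max {s \<in> T. P s} \<in> T" "P (Max {s \<in> T. P s})" using Max_in[OF fin'(1) ne1] by auto
  have b: "Min {s \<in> T. \<not> P s} \<in> T" "\<not> P (Min {s \<in> T. \<not> P s})" using Min_in[OF fin'(2) ne2] by auto
  have "\<not> (Max {s \<in> T. P s} < w \<and> w < Min {s \<in> T. \<not> P s})" if "w \<in> T" for w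
    using Max_ge[OF fin'(1)] Min_le[OF fin'(2)] that by (cases "P w") force+
  moreover have "Max {s \<in> T. P s} < Min {s \<in> T. \<not> P s}"
    using a b dc by (meson not_le less_imp_le)
  ultimately show ?thesis using a b by (auto simp: consec_def)
qed

definition limpt :: "(nat \<Rightarrow> real set) \<Rightarrow> real \<Rightarrow> bool" where
  "limpt S xb \<longleftrightarrow> (\<forall>\<epsilon>>0. infinite {y \<in> (\<Union>l. S l). \<bar>y - xb\<bar> < \<epsilon>})"

lemma limpt_point_near:
  assumes "limpt S xb" and "\<epsilon> > 0"
  obtains y l where "y \<in> S l" "\<bar>y - xb\<bar> < \<epsilon>"
proof -
  have "{y \<in> (\<Union>l. S l). \<bar>y - xb\<bar> < \<epsilon>} \<noteq> {}"
    using assms unfolding limpt_def by (metis finite.emptyI)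
  thus ?thesis using that by blast
qed

section \<open>An abstract interval-refinement scheme\<close>

locale interval_refinement =
  fixes S :: "nat \<Rightarrow> real set" and C :: "nat \<Rightarrow> (real \<times> real) set"
    and \<rho> :: "nat \<Rightarrow> real \<Rightarrow> real \<Rightarrow> real" and f :: "real \<Rightarrow> real"
    and N :: nat and H \<kappa> \<kappa>1 K2 :: real and Q :: nat
  assumes N: "N \<ge> 1" and H: "H > 0" and \<kappa>: "0 < \<kappa>" "\<kappa> < 1" and \<kappa>1: "\<kappa>1 > 0"
    and K2: "K2 \<ge> 0"
    and holder: "\<forall>x\<in>{0..1}. \<forall>y\<in>{0..1}. \<bar>f x - f y\<bar> \<le> H * \<bar>x - y\<bar> powr (1 / real N)"
    and S_finite: "finite (S l)" and S_unit: "S l \<subseteq> {0..1}"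
    and S_zero: "0 \<in> S l" and S_one: "1 \<in> S l"
    and S_mono: "S l \<subseteq> S (Suc l)"
    and chosen_consec: "(u, v) \<in> C l \<Longrightarrow> consec (S l) u v"
    and chosen_card: "card (C l) \<le> Q"
    and char_lower: "consec (S l) u v \<Longrightarrow>
       \<kappa>1 * (v - u) powr (1 / real N) - 2 * min (f u) (f v) \<le> \<rho> l u v"
    and char_upper: "consec (S l) u v \<Longrightarrow>
       \<rho> l u v \<le> K2 * (v - u) powr (1 / real N) - 2 * min (f u) (f v)"
    and char_maximal: "(u, v) \<in> C l \<Longrightarrow> consec (S l) a b \<Longrightarrow> (a, b) \<notin> C l \<Longrightarrow>
       \<rho> l a b \<le> \<rho> l u v"
    and new_in_chosen: "(u, v) \<in> C l \<Longrightarrow>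
       \<exists>y\<in>S (Suc l). u + \<kappa> * (v - u) \<le> y \<and> y \<le> v - \<kappa> * (v - u)"
    and new_from_chosen: "y \<in> S (Suc l) \<Longrightarrow> y \<notin> S l \<Longrightarrow>
       \<exists>(u, v)\<in>C l. u + \<kappa> * (v - u) \<le> y \<and> y \<le> v - \<kappa> * (v - u)"
begin

lemma S_mono_le: "l \<le> l' \<Longrightarrow> S l \<subseteq> S l'"
  by (rule lift_Suc_mono_le[of S]) (use S_mono in auto)

lemma chosen_finite: "finite (C l)"
proof -
  have "C l \<subseteq> S l \<times> S l" using chosen_consec by (auto simp: consec_def)
  thus ?thesis using S_finite by (meson finite_SigmaI finite_subset)
qed

lemma holder_near:
  assumes "x \<in> {0..1}" "y \<in> {0..1}" "\<theta> > 0" "\<bar>x - y\<bar> < \<theta> ^ N"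
  shows "\<bar>f x - f y\<bar> < H * \<theta>"
proof -
  have "\<bar>x - y\<bar> powr (1 / real N) < \<theta>" using root_less_of_less_pow[OF N] assms by simp
  with holder assms H show ?thesis by (meson mult_strict_left_mono order_le_less_trans)
qed

lemma limpt_in_unit:
  assumes "limpt S xb"
  shows "xb \<in> {0..1}"
proof (rule ccontr)
  assume out: "xb \<notin> {0..1}"
  define e where "e = (if xb < 0 then - xb else xb - 1)"
  have "e > 0" using out by (auto simp: e_def)
  then obtain y l where "y \<in> S l" "\<bar>y - xb\<bar> < e" using limpt_point_near[OF assms] by blast
  thus False using S_unit out by (force simp: e_def)
qed

lemma point_enters:
  assumes "y \<in> S m" "y \<notin> S l0"
  shows "\<exists>l\<ge>l0. y \<in> S (Suc l) \<and> y \<notin> S l"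
proof -
  have "m > l0" using assms S_mono_le[of m l0] by (meson not_le subsetD less_imp_le_nat)
  then obtain d where m: "m = l0 + d" by (metis less_imp_add_positive)
  have "y \<in> S (l0 + d) \<Longrightarrow> \<exists>l\<ge>l0. y \<in> S (Suc l) \<and> y \<notin> S l" for d
  proof (induction d)
    case 0 thus ?case using assms by simp
  next
    case (Suc d) thus ?case by (cases "y \<in> S (l0 + d)") (auto intro: exI[of _ "l0 + d"])
  qed
  thus ?thesis using assms m by blast
qed

lemma new_point_in_chosen:
  assumes "(u, v) \<in> C l"
  shows "\<exists>y\<in>S (Suc l) - S l. u + \<kappa> * (v - u) \<le> y \<and> y \<le> v - \<kappa> * (v - u)"
proof -
  obtain y where y: "y \<in> S (Suc l)" "u + \<kappa> * (v - u) \<le> y" "y \<le> v - \<kappa> * (v - u)"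
    using new_in_chosen[OF assms] by blast
  have cs: "consec (S l) u v" using chosen_consec[OF assms] .
  hence "\<kappa> * (v - u) > 0" using \<kappa> by (simp add: consec_def)
  hence "y \<notin> S l" using y consec_outside[OF cs] by force
  thus ?thesis using y by blast
qed

text \<open>Near a limit point, arbitrarily small intervals are chosen arbitrarily late:
  points keep arriving near xb, and each arrives inside a chosen interval which
  cannot be long, since an older point near xb lies outside it.\<close>
lemma chosen_interval_near_limit:
  assumes lp: "limpt S xb" and e: "\<epsilon> > 0"
  shows "\<exists>l\<ge>L. \<exists>(u, v)\<in>C l. xb - \<epsilon> < u \<and> v < xb + \<epsilon> \<and> v - u < \<epsilon>"
proof -
  define \<delta> where "\<delta> = \<kappa> * \<epsilon> / 4"
  have \<delta>: "\<delta> > 0" "\<delta> \<le> \<epsilon> / 4" using \<kappa> e by (simp_all add: \<delta>_def)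
  define W where "W = {y \<in> (\<Union>l. S l). \<bar>y - xb\<bar> < \<delta>}"
  have Winf: "infinite W" using lp \<delta> unfolding limpt_def W_def by blast
  obtain y0 l1 where y0: "y0 \<in> S l1" "\<bar>y0 - xb\<bar> < \<delta>" using limpt_point_near[OF lp \<delta>(1)] by blast
  define l0 where "l0 = max L l1"
  have "infinite (W - S l0)" using Winf S_finite by auto
  then obtain y m where y: "y \<in> S m" "y \<notin> S l0" "\<bar>y - xb\<bar> < \<delta>"
    by (metis (no_types, lifting) DiffE UN_iff W_def ex_in_conv finite.emptyI mem_Collect_eq)
  obtain l where l: "l \<ge> l0" "y \<in> S (Suc l)" "y \<notin> S l" using point_enters[OF y(1,2)] by blast
  obtain u v where uv: "(u, v) \<in> C l" "u + \<kappa> * (v - u) \<le> y" "y \<le> v - \<kappa> * (v - u)"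
    using new_from_chosen[OF l(2,3)] by blast
  have cs: "consec (S l) u v" using chosen_consec[OF uv(1)] .
  have "y0 \<in> S l" using S_mono_le[of l1 l] y0 l by (auto simp: l0_def)
  have short: "v - u < \<epsilon> / 2"
  proof (rule ccontr)
    assume "\<not> v - u < \<epsilon> / 2"
    hence "\<kappa> * (v - u) \<ge> 2 * \<delta>" using \<kappa> mult_left_mono[of "\<epsilon> / 2" "v - u" \<kappa>]
      by (simp add: \<delta>_def)
    hence "u < y0" "y0 < v" using uv y y0 by auto
    thus False using consec_outside[OF cs \<open>y0 \<in> S l\<close>] by auto
  qed
  have "\<kappa> * (v - u) \<ge> 0" using \<kappa> cs by (simp add: consec_def)
  hence "xb - \<epsilon> < u" "v < xb + \<epsilon>" using uv y(3) short \<delta> by (auto simp: abs_less_iff)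
  thus ?thesis using uv(1) l short e by (intro exI[of _ l]) (auto simp: l0_def)
qed

definition low_choice :: "nat \<Rightarrow> real \<Rightarrow> bool" where
  "low_choice l c \<longleftrightarrow> (\<exists>(u, v)\<in>C l. \<rho> l u v \<le> c)"

lemma chosen_if_higher:
  assumes "low_choice l c" "consec (S l) a b" "c < \<rho> l a b"
  shows "(a, b) \<in> C l"
  using assms char_maximal by (force simp: low_choice_def)

text \<open>The small chosen intervals near a limit point xb have characteristic close to
  -2 f(xb); hence for every \<eta> > 0 infinitely many steps are below -2 f(xb) + \<eta>.\<close>
lemma low_choice_frequent:
  assumes lp: "limpt S xb" and \<eta>: "\<eta> > 0"
  shows "\<exists>l\<ge>L. low_choice l (- 2 * f xb + \<eta>)"
proof -
  define \<theta> where "\<theta> = \<eta> / (K2 + 2 * H)"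
  have \<theta>: "\<theta> > 0" "(K2 + 2 * H) * \<theta> = \<eta>" using \<eta> K2 H by (simp_all add: \<theta>_def)
  obtain l u v where l: "l \<ge> L" "(u, v) \<in> C l"
    and near: "xb - \<theta> ^ N < u" "v < xb + \<theta> ^ N" "v - u < \<theta> ^ N"
    using chosen_interval_near_limit[OF lp, of "\<theta> ^ N" L] \<theta> by auto
  have cs: "consec (S l) u v" using chosen_consec[OF l(2)] .
  hence uv: "u \<in> {0..1}" "v \<in> {0..1}" "u < v" using S_unit[of l] by (auto simp: consec_def)
  have xb: "xb \<in> {0..1}" using limpt_in_unit[OF lp] .
  have "(v - u) powr (1 / real N) < \<theta>" using root_less_of_less_pow[OF N _ \<theta>(1) near(3)] uv by simp
  hence "K2 * (v - u) powr (1 / real N) \<le> K2 * \<theta>" using K2 by (simp add: mult_left_mono)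
  moreover have "\<bar>u - xb\<bar> < \<theta> ^ N" "\<bar>v - xb\<bar> < \<theta> ^ N" using near uv by auto
  hence "\<bar>f u - f xb\<bar> < H * \<theta>" "\<bar>f v - f xb\<bar> < H * \<theta>" using holder_near uv xb \<theta> by auto
  ultimately have "\<rho> l u v \<le> - 2 * f xb + (K2 + 2 * H) * \<theta>"
    using char_upper[OF cs] by (simp add: algebra_simps)
  thus ?thesis using l \<theta>(2) by (auto simp: low_choice_def)
qed

lemma char_above_min:
  assumes "consec (S l) a b"
  shows "- 2 * min (f a) (f b) < \<rho> l a b"
proof -
  have "0 < \<kappa>1 * (b - a) powr (1 / real N)" using assms \<kappa>1 by (simp add: consec_def)
  thus ?thesis using char_lower[OF assms] by linarith
qed

subsection \<open>Trial values never drop below the value at a limit point\<close>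

definition gap :: "nat \<Rightarrow> real \<Rightarrow> real" where
  "gap l p = Min ((\<lambda>s. \<bar>s - p\<bar>) ` (S l - {p}))"

lemma gap_finite: "finite ((\<lambda>s. \<bar>s - p\<bar>) ` (S l - {p}))"
  using S_finite by simp

lemma gap_le: "s \<in> S l \<Longrightarrow> s \<noteq> p \<Longrightarrow> gap l p \<le> \<bar>s - p\<bar>"
  unfolding gap_def using gap_finite by (intro Min_le) auto

lemma gap_attained: "\<exists>s\<in>S l - {p}. gap l p = \<bar>s - p\<bar>"
proof -
  have "S l - {p} \<noteq> {}" using S_zero[of l] S_one[of l] by (cases "p = 0") auto
  thus ?thesis unfolding gap_def using Min_in[OF gap_finite] by auto
qed

lemma gap_pos: "0 < gap l p"
  using gap_attained[of l p] by auto

lemma gap_le_one: "p \<in> {0..1} \<Longrightarrow> gap l p \<le> 1"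
  using gap_le[of 0 l p] gap_le[of 1 l p] S_zero S_one by (cases "p = 0") auto

lemma gap_antimono: "gap (Suc l) p \<le> gap l p"
proof -
  obtain s where "s \<in> S l - {p}" "gap l p = \<bar>s - p\<bar>" using gap_attained by blast
  thus ?thesis using gap_le[of s "Suc l" p] S_mono by auto
qed

lemma gap_step:
  assumes p: "p \<in> S l"
    and adj: "\<And>a b. consec (S l) a b \<Longrightarrow> a = p \<or> b = p \<Longrightarrow> (a, b) \<in> C l"
  shows "\<exists>y\<in>S (Suc l) - S l. \<bar>y - p\<bar> \<le> (1 - \<kappa>) * gap l p"
proof -
  obtain s where s: "s \<in> S l" "s \<noteq> p" "gap l p = \<bar>s - p\<bar>" using gap_attained by blast
  define u v where "u = min p s" and "v = max p s"
  have "\<not> (u < w \<and> w < v)" if "w \<in> S l" for w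
  proof (cases "w = p")
    case False thus ?thesis using gap_le[OF that False] s by (auto simp: u_def v_def)
  qed (auto simp: u_def v_def)
  hence "consec (S l) u v" using s p by (auto simp: consec_def u_def v_def min_def max_def)
  moreover have "u = p \<or> v = p" by (auto simp: u_def v_def min_def max_def)
  ultimately have "(u, v) \<in> C l" using adj by blast
  then obtain y where y: "y \<in> S (Suc l) - S l" "u + \<kappa> * (v - u) \<le> y" "y \<le> v - \<kappa> * (v - u)"
    using new_point_in_chosen by blast
  have "v - u = gap l p" using s by (auto simp: u_def v_def)
  moreover have "\<bar>y - p\<bar> \<le> (v - u) - \<kappa> * (v - u)"
  proof -
    have "u \<le> v" by (simp add: u_def v_def)
    hence "0 \<le> \<kappa> * (v - u)" "\<kappa> * (v - u) \<le> v - u"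
      using \<kappa> mult_right_mono[of \<kappa> 1 "v - u"] by auto
    thus ?thesis using y(2,3) by (cases "p < s") (auto simp: u_def v_def abs_le_iff)
  qed
  ultimately show ?thesis using y(1) by (auto simp: algebra_simps)
qed

lemma accumulation_at_refined_point:
  assumes p: "p \<in> S l0"
    and freq: "\<And>L. \<exists>l\<ge>L. \<forall>a b. consec (S l) a b \<longrightarrow> a = p \<or> b = p \<longrightarrow> (a, b) \<in> C l"
    and \<delta>: "\<delta> > 0"
  shows "\<exists>L. \<forall>l\<ge>L. m \<le> card {s \<in> S l. \<bar>s - p\<bar> < \<delta>}"
proof -
  have step: "\<exists>y\<in>S (Suc l) - S l. \<bar>y - p\<bar> \<le> (1 - \<kappa>) * gap l p"
    if "l \<ge> l0" "\<forall>a b. consec (S l) a b \<longrightarrow> a = p \<or> b = p \<longrightarrow> (a, b) \<in> C l" for l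
    using gap_step[of p l] S_mono_le[OF that(1)] p that(2) by blast
  have "\<exists>l\<ge>L. gap (Suc l) p \<le> (1 - \<kappa>) * gap l p" for L
  proof -
    obtain l where "l \<ge> max L l0" "\<forall>a b. consec (S l) a b \<longrightarrow> a = p \<or> b = p \<longrightarrow> (a, b) \<in> C l"
      using freq by blast
    moreover from this obtain y where "y \<in> S (Suc l) - S l" "\<bar>y - p\<bar> \<le> (1 - \<kappa>) * gap l p"
      using step by fastforce
    moreover have "y \<noteq> p" using calculation p S_mono_le[of l0 l] by auto
    ultimately show ?thesis using gap_le[of y "Suc l" p] by (intro exI[of _ l]) auto
  qed
  then obtain Lg where Lg: "\<forall>l\<ge>Lg. gap l p < \<delta>"
    using eventually_small_of_frequent_contraction[of "\<lambda>l. gap l p" "1 - \<kappa>"]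
      gap_antimono gap_le_one S_unit p \<kappa> \<delta> by force
  define cnt where "cnt l = card {s \<in> S l. \<bar>s - p\<bar> < \<delta>}" for l
  have fin: "finite {s \<in> S l. \<bar>s - p\<bar> < \<delta>}" for l using S_finite by simp
  have "cnt l \<le> cnt (Suc l)" for l
    unfolding cnt_def using S_mono fin by (intro card_mono) auto
  moreover have "\<exists>l\<ge>L. cnt l < cnt (Suc l)" for L
  proof -
    obtain l where l: "l \<ge> max L (max l0 Lg)"
      "\<forall>a b. consec (S l) a b \<longrightarrow> a = p \<or> b = p \<longrightarrow> (a, b) \<in> C l"
      using freq by blast
    then obtain y where y: "y \<in> S (Suc l) - S l" "\<bar>y - p\<bar> \<le> (1 - \<kappa>) * gap l p"
      using step by fastforce
    have "(1 - \<kappa>) * gap l p \<le> gap l p" using \<kappa> gap_pos[of l p] by (simp add: algebra_simps)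
    hence "\<bar>y - p\<bar> < \<delta>" using y(2) Lg l(1) by force
    hence "insert y {s \<in> S l. \<bar>s - p\<bar> < \<delta>} \<subseteq> {s \<in> S (Suc l). \<bar>s - p\<bar> < \<delta>}"
      using y(1) S_mono by auto
    hence "card (insert y {s \<in> S l. \<bar>s - p\<bar> < \<delta>}) \<le> cnt (Suc l)"
      unfolding cnt_def using fin by (intro card_mono) auto
    thus ?thesis using y(1) fin l(1) by (intro exI[of _ l]) (auto simp: cnt_def)
  qed
  ultimately show ?thesis using unbounded_of_frequent_increase[of cnt] by (simp add: cnt_def)
qed

text \<open>If every interval with left end in P is chosen, then P contains at most Q+1 points:
  distinct left ends give distinct chosen intervals (1 is the only point without a right
  neighbour).\<close>
lemma chosen_touching_card:
  assumes touch: "\<And>a b. consec (S l) a b \<Longrightarrow> a \<in> P \<Longrightarrow> (a, b) \<in> C l"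
  shows "card (S l \<inter> P) \<le> Q + 1"
proof -
  define A where "A = S l \<inter> P - {1}"
  define next_pt where "next_pt a = Min {s \<in> S l. \<not> s \<le> a}" for a
  have "consec (S l) a (next_pt a)" if "a \<in> A" for a
  proof -
    have "a \<in> S l" "a < 1" using that S_unit by (force simp: A_def)+
    hence "consec (S l) (Max {s \<in> S l. s \<le> a}) (next_pt a)"
      unfolding next_pt_def using S_one[of l] S_finite by (intro split_consec) auto
    moreover have "Max {s \<in> S l. s \<le> a} = a"
      using \<open>a \<in> S l\<close> S_finite[of l] by (intro Max_eqI) auto
    ultimately show ?thesis by simp
  qed
  hence "(\<lambda>a. (a, next_pt a)) ` A \<subseteq> C l" using touch by (auto simp: A_def)
  hence "card A \<le> card (C l)" using chosen_finite by (intro card_inj_on_le) (auto simp: inj_on_def)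
  moreover have "card (S l \<inter> P) \<le> card A + 1"
    using S_finite[of l] card_Diff_singleton_if[of "S l \<inter> P" 1] by (auto simp: A_def)
  ultimately show ?thesis using chosen_card[of l] by linarith
qed

text \<open>If some point p0 had f p0 < f xb, all intervals
  touching the sublevel set P around p0 would be chosen at every step that is below
  -2 f(xb) + \<eta>; these steps recur, so points accumulate at p0 inside P, until P holds
  more points than the at most Q chosen intervals allow.\<close>
lemma values_above_limit_value:
  assumes lp: "limpt S xb" and p0: "p0 \<in> S l0"
  shows "f xb \<le> f p0"
proof (rule ccontr)
  assume "\<not> f xb \<le> f p0"
  define \<eta> where "\<eta> = f xb - f p0"
  have \<eta>: "\<eta> > 0" using \<open>\<not> f xb \<le> f p0\<close> by (simp add: \<eta>_def)
  define P where "P = {y. f y \<le> f xb - \<eta> / 2}"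
  have touch: "(a, b) \<in> C l"
    if "low_choice l (- 2 * f xb + \<eta>)" "consec (S l) a b" "a \<in> P \<or> b \<in> P" for l a b
  proof -
    have "- 2 * f xb + \<eta> < \<rho> l a b" using char_above_min[OF that(2)] that(3) by (auto simp: P_def)
    thus ?thesis using chosen_if_higher[OF that(1,2)] by blast
  qed
  have p0_unit: "p0 \<in> {0..1}" using p0 S_unit by blast
  define \<delta> where "\<delta> = (\<eta> / (2 * H)) ^ N"
  have \<delta>: "\<delta> > 0" using \<eta> H by (simp add: \<delta>_def)
  have near_P: "{s \<in> S l. \<bar>s - p0\<bar> < \<delta>} \<subseteq> S l \<inter> P" for l
  proof
    fix y assume y: "y \<in> {s \<in> S l. \<bar>s - p0\<bar> < \<delta>}"
    hence "y \<in> {0..1}" using S_unit by blast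
    hence "\<bar>f y - f p0\<bar> < H * (\<eta> / (2 * H))"
      using holder_near[OF _ p0_unit, of y "\<eta> / (2 * H)"] y \<eta> H by (simp add: \<delta>_def)
    also have "H * (\<eta> / (2 * H)) = \<eta> / 2" using H by simp
    finally have "f y - f p0 < \<eta> / 2" by linarith
    hence "f y \<le> f xb - \<eta> / 2" unfolding \<eta>_def by (simp add: field_simps)
    thus "y \<in> S l \<inter> P" using y by (simp add: P_def)
  qed
  have "p0 \<in> P" using \<eta> by (simp add: P_def \<eta>_def field_simps)
  hence "\<exists>l\<ge>L. \<forall>a b. consec (S l) a b \<longrightarrow> a = p0 \<or> b = p0 \<longrightarrow> (a, b) \<in> C l" for L
    using low_choice_frequent[OF lp \<eta>, of L] touch by blast
  then obtain L where L: "\<forall>l\<ge>L. Q + 2 \<le> card {s \<in> S l. \<bar>s - p0\<bar> < \<delta>}"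
    using accumulation_at_refined_point[OF p0 _ \<delta>] by blast
  obtain l where l: "l \<ge> L" "low_choice l (- 2 * f xb + \<eta>)" using low_choice_frequent[OF lp \<eta>] by blast
  have "card {s \<in> S l. \<bar>s - p0\<bar> < \<delta>} \<le> card (S l \<inter> P)"
    using near_P S_finite by (intro card_mono) auto
  also have "\<dots> \<le> Q + 1" using chosen_touching_card touch[OF l(2)] by blast
  finally show False using L l(1) by fastforce
qed

subsection \<open>Limit points are approached from both sides\<close>

lemma cut_bracket:
  assumes dc: "\<And>s t. P t \<Longrightarrow> s \<le> t \<Longrightarrow> P s" and P0: "P 0" and P1: "\<not> P 1"
  defines "a \<equiv> \<lambda>l. Max {s \<in> S l. P s}" and "b \<equiv> \<lambda>l. Min {s \<in> S l. \<not> P s}"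
  shows "consec (S l) (a l) (b l)" and "P (a l)" and "\<not> P (b l)"
    and "a l \<le> a (Suc l)" and "b (Suc l) \<le> b l"
proof -
  have fin: "finite {s \<in> S l. P s}" "finite {s \<in> S l. \<not> P s}" for l using S_finite by auto
  have ne: "0 \<in> {s \<in> S l. P s}" "1 \<in> {s \<in> S l. \<not> P s}" for l using S_zero S_one P0 P1 by auto
  show "consec (S l) (a l) (b l)"
    unfolding a_def b_def using S_finite dc ne by (intro split_consec) blast+
  show "P (a l)" using Max_in[OF fin(1)] ne unfolding a_def by blast
  show "\<not> P (b l)" using Min_in[OF fin(2)] ne unfolding b_def by blast
  show "a l \<le> a (Suc l)" unfolding a_def by (intro Max_mono; use S_mono fin ne in blast)
  show "b (Suc l) \<le> b l" unfolding b_def by (intro Min_antimono; use S_mono fin ne in blast)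
qed

lemma bracket_endpoint_close:
  assumes lp: "limpt S xb" and br: "\<And>l. consec (S l) (a l) (b l)" "\<And>l. a l \<le> xb" "\<And>l. xb \<le> b l"
    and \<tau>: "\<tau> > 0"
  shows "\<exists>L. \<forall>l\<ge>L. \<bar>a l - xb\<bar> < \<tau> \<or> \<bar>b l - xb\<bar> < \<tau>"
proof -
  obtain y L where y: "y \<in> S L" "\<bar>y - xb\<bar> < \<tau>" using limpt_point_near[OF lp \<tau>] by blast
  have "\<bar>a l - xb\<bar> < \<tau> \<or> \<bar>b l - xb\<bar> < \<tau>" if "l \<ge> L" for l
  proof -
    have "y \<le> a l \<or> b l \<le> y" using consec_outside[OF br(1)] S_mono_le[OF that] y(1) by blast
    thus ?thesis using y(2) br(2,3)[of l] by auto
  qed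
  thus ?thesis by blast
qed

text \<open>A bracket around a limit point cannot stay wide: one end is eventually close to xb,
  so the bracket's characteristic stays well above -2 f(xb); at the recurring low steps
  it is therefore chosen, and its new central point shrinks it by the factor 1-\<kappa>.\<close>
lemma no_wide_bracket:
  assumes lp: "limpt S xb" and \<epsilon>: "\<epsilon> > 0"
    and br: "\<And>l. consec (S l) (a l) (b l)" "\<And>l. a l \<le> xb" "\<And>l. xb \<le> b l"
    and wide: "\<And>l. \<epsilon> \<le> b l - a l"
    and mono: "\<And>l. a l \<le> a (Suc l)" "\<And>l. b (Suc l) \<le> b l"
  shows False
proof -
  define \<beta> where "\<beta> = \<kappa>1 * \<epsilon> powr (1 / real N)"
  have \<beta>: "\<beta> > 0" using \<kappa>1 \<epsilon> by (simp add: \<beta>_def)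
  define \<theta> where "\<theta> = \<beta> / (4 * H)"
  have \<theta>: "\<theta> > 0" "2 * (H * \<theta>) = \<beta> / 2" using \<beta> H by (simp_all add: \<theta>_def)
  obtain L where L: "\<forall>l\<ge>L. \<bar>a l - xb\<bar> < \<theta> ^ N \<or> \<bar>b l - xb\<bar> < \<theta> ^ N"
    using bracket_endpoint_close[OF lp br, of "\<theta> ^ N"] \<theta> by auto
  have xb: "xb \<in> {0..1}" using limpt_in_unit[OF lp] .
  have ab_unit: "a l \<in> {0..1}" "b l \<in> {0..1}" for l
    using br(1)[of l] S_unit[of l] unfolding consec_def by auto
  have contract: "b (Suc l) - a (Suc l) \<le> (1 - \<kappa>) * (b l - a l)"
    if l: "l \<ge> L" "low_choice l (- 2 * f xb + \<beta> / 2)" for l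
  proof -
    have "min (f (a l)) (f (b l)) < f xb + H * \<theta>"
      using L l(1) holder_near[OF ab_unit(1) xb \<theta>(1)] holder_near[OF ab_unit(2) xb \<theta>(1)] by force
    moreover have "\<beta> \<le> \<kappa>1 * (b l - a l) powr (1 / real N)"
      unfolding \<beta>_def using wide[of l] \<epsilon> \<kappa>1 by (intro mult_left_mono powr_mono2) auto
    ultimately have "- 2 * f xb + \<beta> / 2 < \<rho> l (a l) (b l)"
      using char_lower[OF br(1)[of l]] \<theta>(2) by linarith
    hence "(a l, b l) \<in> C l" using chosen_if_higher[OF l(2) br(1)] by blast
    then obtain y where y: "y \<in> S (Suc l)" "a l + \<kappa> * (b l - a l) \<le> y" "y \<le> b l - \<kappa> * (b l - a l)"
      using new_point_in_chosen by blast
    have "y \<le> a (Suc l) \<or> b (Suc l) \<le> y" using consec_outside[OF br(1) y(1)] .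
    thus ?thesis using y(2,3) mono[of l] by (auto simp: algebra_simps)
  qed
  have "\<exists>L'. \<forall>l\<ge>L'. b l - a l < \<epsilon>"
  proof (rule eventually_small_of_frequent_contraction[OF _ _ _ _ _ \<epsilon>])
    show "b (Suc l) - a (Suc l) \<le> b l - a l" for l using mono[of l] by linarith
    show "b l - a l \<le> 1" for l using ab_unit[of l] by auto
    show "0 \<le> 1 - \<kappa>" "1 - \<kappa> < 1" using \<kappa> by auto
    show "\<exists>l\<ge>L'. b (Suc l) - a (Suc l) \<le> (1 - \<kappa>) * (b l - a l)" for L'
      using low_choice_frequent[OF lp, of "\<beta> / 2" "max L L'"] \<beta> contract by auto
  qed
  then obtain L' where "b L' - a L' < \<epsilon>" by blast
  thus False using wide[of L'] by linarith
qed

lemma points_right_of_limit: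
  assumes lp: "limpt S xb" and x1: "xb < 1" and \<epsilon>: "\<epsilon> > 0"
  shows "\<exists>y\<in>(\<Union>l. S l). xb < y \<and> y < xb + \<epsilon>"
proof (rule ccontr)
  assume none: "\<not> ?thesis"
  define a where "a l = Max {s \<in> S l. s \<le> xb}" for l
  define b where "b l = Min {s \<in> S l. \<not> s \<le> xb}" for l
  have "0 \<le> xb" "\<not> 1 \<le> xb" using limpt_in_unit[OF lp] x1 by auto
  note cut = cut_bracket[of "\<lambda>s. s \<le> xb", OF _ this, folded a_def b_def, simplified]
  have "xb + \<epsilon> \<le> b l" for l
  proof -
    have "b l \<in> (\<Union>l. S l)" using cut(1)[of l] by (auto simp: consec_def)
    thus ?thesis using none cut(3)[of l] by force
  qed
  moreover have bracket: "a l \<le> xb" "xb \<le> b l" for l using cut(2,3)[of l] by auto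
  ultimately have "\<epsilon> \<le> b l - a l" for l by (smt (verit))
  thus False by (rule no_wide_bracket[OF lp \<epsilon> cut(1) bracket _ cut(4,5)])
qed

lemma points_left_of_limit:
  assumes lp: "limpt S xb" and x0: "0 < xb" and \<epsilon>: "\<epsilon> > 0"
  shows "\<exists>y\<in>(\<Union>l. S l). xb - \<epsilon> < y \<and> y < xb"
proof (rule ccontr)
  assume none: "\<not> ?thesis"
  define a where "a l = Max {s \<in> S l. s < xb}" for l
  define b where "b l = Min {s \<in> S l. \<not> s < xb}" for l
  have "0 < xb" "\<not> 1 < xb" using limpt_in_unit[OF lp] x0 by auto
  note cut = cut_bracket[of "\<lambda>s. s < xb", OF _ this, folded a_def b_def, simplified]
  have "a l \<le> xb - \<epsilon>" for l
  proof -
    have "a l \<in> (\<Union>l. S l)" using cut(1)[of l] by (auto simp: consec_def)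
    thus ?thesis using none cut(2)[of l] by force
  qed
  moreover have bracket: "a l \<le> xb" "xb \<le> b l" for l using cut(2,3)[of l] by auto
  ultimately have "\<epsilon> \<le> b l - a l" for l by (smt (verit))
  thus False by (rule no_wide_bracket[OF lp \<epsilon> cut(1) bracket _ cut(4,5)])
qed

end

lemma holder_continuous:
  fixes f :: "real \<Rightarrow> real"
  assumes N: "N \<ge> 1" and H: "H > 0"
    and holder: "\<forall>x\<in>{0..1}. \<forall>y\<in>{0..1}. \<bar>f x - f y\<bar> \<le> H * \<bar>x - y\<bar> powr (1 / real N)"
  shows "continuous_on {0..1} f"
proof -
  have "uniformly_continuous_on {0..1} f"
    unfolding uniformly_continuous_on_def
  proof (intro allI impI)
    fix e :: real assume e: "e > 0"
    have th: "e / H > 0" using e H by simp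
    show "\<exists>d>0. \<forall>x\<in>{0..1}. \<forall>x'\<in>{0..1}. dist x' x < d \<longrightarrow> dist (f x') (f x) < e"
    proof (intro exI[of _ "(e / H) ^ N"] conjI ballI impI)
      show "(e / H) ^ N > 0" using th by simp
      fix x x' :: real
      assume x: "x \<in> {0..1}" and x': "x' \<in> {0..1}" and d: "dist x' x < (e / H) ^ N"
      have "\<bar>x' - x\<bar> powr (1 / real N) < e / H"
        using root_less_of_less_pow[OF N _ th] d by (simp add: dist_real_def)
      hence "H * \<bar>x' - x\<bar> powr (1 / real N) < e" using H by (simp add: field_simps)
      thus "dist (f x') (f x) < e" using holder x x' by (force simp: dist_real_def)
    qed
  qed
  thus ?thesis by (rule uniformly_continuous_imp_continuous)
qed

lemma interior_local_max:
  fixes f :: "real \<Rightarrow> real"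
  assumes cont: "continuous_on {0..1} f" and lo: "0 \<le> lo" and hi: "hi \<le> 1"
    and w: "lo < w" "w < hi" and fw: "f lo \<le> f w" "f hi \<le> f w"
  shows "\<exists>c. lo < c \<and> c < hi \<and> loc_max_01 f c"
proof -
  have "continuous_on {lo..hi} f" by (rule continuous_on_subset[OF cont]) (use lo hi in auto)
  then obtain c where c: "c \<in> {lo..hi}" "\<forall>t\<in>{lo..hi}. f t \<le> f c"
    using continuous_attains_sup[of "{lo..hi}" f] w by auto
  define c' where "c' = (if c = lo \<or> c = hi then w else c)"
  have c'_in: "lo < c'" "c' < hi" using c w by (auto simp: c'_def)
  have c'_max: "\<forall>t\<in>{lo..hi}. f t \<le> f c'"
    using c fw by (auto simp: c'_def intro: order_trans)
  have "loc_max_01 f c'"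
    unfolding loc_max_01_def
  proof (intro conjI exI[of _ "min (c' - lo) (hi - c')"] ballI impI)
    show "c' \<in> {0..1}" using c'_in lo hi by auto
    show "min (c' - lo) (hi - c') > 0" using c'_in by simp
    fix y assume "y \<in> {0..1}" "\<bar>y - c'\<bar> < min (c' - lo) (hi - c')"
    hence "y \<in> {lo..hi}" by auto
    thus "f y \<le> f c'" using c'_max by blast
  qed
  thus ?thesis using c'_in by blast
qed

text \<open>With finitely many local extrema, a point xb that has points of value \<ge> f xb
  arbitrarily close on each side (inside [0,1]) is a local minimum: otherwise a lower
  value next to xb together with such a point would enclose a local maximum
  arbitrarily close to xb.\<close>
lemma local_min_from_sides:
  fixes f :: "real \<Rightarrow> real"
  assumes cont: "continuous_on {0..1} f"
    and fin: "finite {x. loc_min_01 f x \<or> loc_max_01 f x}"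
    and xb: "xb \<in> {0..1}"
    and R: "\<And>\<epsilon>. xb < 1 \<Longrightarrow> \<epsilon> > 0 \<Longrightarrow> \<exists>w. xb < w \<and> w < xb + \<epsilon> \<and> f w \<ge> f xb"
    and L: "\<And>\<epsilon>. xb > 0 \<Longrightarrow> \<epsilon> > 0 \<Longrightarrow> \<exists>w. xb - \<epsilon> < w \<and> w < xb \<and> f w \<ge> f xb"
  shows "loc_min_01 f xb"
proof (rule ccontr)
  assume nm: "\<not> loc_min_01 f xb"
  define E where "E = {x. loc_min_01 f x \<or> loc_max_01 f x} - {xb}"
  have finE: "finite E" using fin by (simp add: E_def)
  define \<delta> where "\<delta> = Min (insert 1 ((\<lambda>e. \<bar>e - xb\<bar>) ` E))"
  have \<delta>: "\<delta> > 0" using finE by (auto simp: \<delta>_def E_def)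
  have far: "\<delta> \<le> \<bar>c - xb\<bar>" if "loc_max_01 f c" "c \<noteq> xb" for c
    using that finE by (auto simp: \<delta>_def E_def)
  have "\<not> (\<forall>y\<in>{0..1}. \<bar>y - xb\<bar> < \<delta> \<longrightarrow> f xb \<le> f y)"
    using nm xb \<delta> unfolding loc_min_01_def by blast
  then obtain y where y: "y \<in> {0..1}" "\<bar>y - xb\<bar> < \<delta>" "f y < f xb" by auto
  have "y \<noteq> xb" using y by auto
  then consider "xb < y" | "y < xb" by linarith
  then obtain c where "loc_max_01 f c" "c \<noteq> xb" "\<bar>c - xb\<bar> < \<delta>"
  proof cases
    case 1
    obtain w where w: "xb < w" "w < y" "f w \<ge> f xb" using R[of "y - xb"] 1 y by auto
    obtain c where "xb < c" "c < y" "loc_max_01 f c"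
      using interior_local_max[OF cont _ _ w(1,2)] w y xb by auto
    thus ?thesis using that y by auto
  next
    case 2
    obtain w where w: "y < w" "w < xb" "f w \<ge> f xb" using L[of "xb - y"] 2 y by auto
    obtain c where "y < c" "c < xb" "loc_max_01 f c"
      using interior_local_max[OF cont _ _ w(1,2)] w y xb by auto
    thus ?thesis using that y by auto
  qed
  thus False using far by fastforce
qed

lemma subseq_from_right:
  fixes X :: "nat \<Rightarrow> real"
  assumes close: "\<And>\<epsilon>. \<epsilon> > 0 \<Longrightarrow> \<exists>k\<ge>1. a < X k \<and> X k < a + \<epsilon>"
  shows "\<exists>\<sigma>. strict_mono \<sigma> \<and> (\<forall>n. \<sigma> n \<ge> 1) \<and> (\<forall>n. X (\<sigma> n) > a) \<and> (\<lambda>n. X (\<sigma> n)) \<longlonglongrightarrow> a"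
proof -
  define P where "P n k \<longleftrightarrow> k \<ge> 1 \<and> a < X k \<and> X k < a + 1 / (real n + 1)" for n k
  have P0: "\<exists>k. P 0 k" using close[of 1] by (auto simp: P_def)
  have Pstep: "\<exists>k'. P (Suc n) k' \<and> k < k'" if "P n k" for n k
  proof -
    \<comment> \<open>a later index is forced by staying closer to a than all earlier terms right of a\<close>
    define D where "D = (\<lambda>i. X i - a) ` {i \<in> {1..k}. a < X i}"
    have D: "finite D" "D \<noteq> {}" using that by (auto simp: D_def P_def)
    hence "Min D > 0" using Min_in[OF D] by (auto simp: D_def)
    then obtain k' where k': "k' \<ge> 1" "a < X k'" "X k' < a + min (1 / (real (Suc n) + 1)) (Min D)"
      using close[of "min (1 / (real (Suc n) + 1)) (Min D)"] by auto
    have "k < k'"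
    proof (rule ccontr)
      assume "\<not> k < k'"
      hence "Min D \<le> X k' - a" using k' D by (intro Min_le) (auto simp: D_def)
      thus False using k' by simp
    qed
    thus ?thesis using k' unfolding P_def by (intro exI[of _ k']) auto
  qed
  obtain \<sigma> where \<sigma>: "\<forall>n. P n (\<sigma> n) \<and> \<sigma> n < \<sigma> (Suc n)"
    using dependent_nat_choice[of P "\<lambda>n k k'. k < k'"] P0 Pstep by blast
  have "(\<lambda>n. X (\<sigma> n)) \<longlonglongrightarrow> a"
  proof (rule tendsto_sandwich[of "\<lambda>_. a" _ _ "\<lambda>n. a + 1 / (real n + 1)"])
    show "\<forall>\<^sub>F n in sequentially. a \<le> X (\<sigma> n)" "\<forall>\<^sub>F n in sequentially. X (\<sigma> n) \<le> a + 1 / (real n + 1)"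
      using \<sigma> by (auto simp: P_def less_imp_le)
    show "(\<lambda>n. a + 1 / (real n + 1)) \<longlonglongrightarrow> a"
      using tendsto_add[OF tendsto_const LIMSEQ_inverse_real_of_nat] by (simp add: inverse_eq_divide add.commute)
  qed simp
  thus ?thesis using \<sigma> by (auto simp: P_def strict_mono_Suc_iff)
qed

lemma subseq_from_left:
  fixes X :: "nat \<Rightarrow> real"
  assumes close: "\<And>\<epsilon>. \<epsilon> > 0 \<Longrightarrow> \<exists>k\<ge>1. a - \<epsilon> < X k \<and> X k < a"
  shows "\<exists>\<sigma>. strict_mono \<sigma> \<and> (\<forall>n. \<sigma> n \<ge> 1) \<and> (\<forall>n. X (\<sigma> n) < a) \<and> (\<lambda>n. X (\<sigma> n)) \<longlonglongrightarrow> a"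
proof -
  have "\<exists>k\<ge>1. - a < - X k \<and> - X k < - a + \<epsilon>" if "\<epsilon> > 0" for \<epsilon>
    using close[OF that] by force
  then obtain \<sigma> where "strict_mono \<sigma>" "\<forall>n. \<sigma> n \<ge> 1" "\<forall>n. - X (\<sigma> n) > - a"
    "(\<lambda>n. - X (\<sigma> n)) \<longlonglongrightarrow> - a"
    using subseq_from_right[of "- a" "\<lambda>k. - X k"] by blast
  moreover have "(\<lambda>n. X (\<sigma> n)) \<longlonglongrightarrow> a" using tendsto_minus[OF calculation(4)] by simp
  ultimately show ?thesis by auto
qed

section \<open>The sorted trial points of PLT\<close>

lemma plt_x_strict_mono:
  assumes inj: "inj_on X {1..L}" and ij: "1 \<le> i" "i < j" "j \<le> L"
  shows "plt_x X L i < plt_x X L j"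
proof -
  let ?xs = "sorted_list_of_set (X ` {1..L})"
  have len: "length ?xs = L" using inj by (simp add: card_image)
  have "sorted_wrt (<) ?xs" by (rule strict_sorted_list_of_set)
  hence "?xs ! (i - 1) < ?xs ! (j - 1)" using ij len by (auto simp: sorted_wrt_iff_nth_less)
  thus ?thesis by (simp add: plt_x_def)
qed

lemma plt_x_mono:
  assumes inj: "inj_on X {1..L}" and ij: "1 \<le> i" "i \<le> j" "j \<le> L"
  shows "plt_x X L i \<le> plt_x X L j"
  using plt_x_strict_mono[OF inj, of i j] ij by (cases "i = j") auto

lemma plt_x_in:
  assumes inj: "inj_on X {1..L}" and i: "1 \<le> i" "i \<le> L"
  shows "plt_x X L i \<in> X ` {1..L}"
proof -
  let ?xs = "sorted_list_of_set (X ` {1..L})"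
  have "length ?xs = L" using inj by (simp add: card_image)
  hence "?xs ! (i - 1) \<in> set ?xs" using i by (intro nth_mem) auto
  thus ?thesis by (simp add: plt_x_def)
qed

lemma plt_x_onto:
  assumes inj: "inj_on X {1..L}" and s: "s \<in> X ` {1..L}"
  shows "\<exists>i. 1 \<le> i \<and> i \<le> L \<and> plt_x X L i = s"
proof -
  let ?xs = "sorted_list_of_set (X ` {1..L})"
  have len: "length ?xs = L" using inj by (simp add: card_image)
  have "s \<in> set ?xs" using s by simp
  then obtain m where "m < length ?xs" "?xs ! m = s" unfolding in_set_conv_nth by blast
  thus ?thesis using len by (intro exI[of _ "Suc m"]) (auto simp: plt_x_def)
qed

lemma plt_x_unit:
  assumes "inj_on X {1..L}" "X ` {1..L} \<subseteq> {0..1}" "1 \<le> i" "i \<le> L"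
  shows "plt_x X L i \<in> {0..1}"
  using plt_x_in assms by blast

lemma plt_x_consec:
  assumes inj: "inj_on X {1..L}" and j: "2 \<le> j" "j \<le> L"
  shows "consec (X ` {1..L}) (plt_x X L (j - 1)) (plt_x X L j)"
  unfolding consec_def
proof (intro conjI ballI)
  show "plt_x X L (j - 1) \<in> X ` {1..L}" "plt_x X L j \<in> X ` {1..L}" using plt_x_in[OF inj] j by auto
  show "plt_x X L (j - 1) < plt_x X L j" using plt_x_strict_mono[OF inj] j by auto
  fix w assume "w \<in> X ` {1..L}"
  then obtain m where m: "1 \<le> m" "m \<le> L" "plt_x X L m = w" using plt_x_onto[OF inj] by blast
  have "plt_x X L m \<le> plt_x X L (j - 1) \<or> plt_x X L j \<le> plt_x X L m"
    using plt_x_mono[OF inj, of m "j - 1"] plt_x_mono[OF inj, of j m] m j by force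
  thus "\<not> (plt_x X L (j - 1) < w \<and> w < plt_x X L j)" using m by auto
qed

lemma consec_plt_x:
  assumes inj: "inj_on X {1..L}" and cs: "consec (X ` {1..L}) u v"
  shows "\<exists>j\<in>{2..L}. u = plt_x X L (j - 1) \<and> v = plt_x X L j"
proof -
  have uv: "u \<in> X ` {1..L}" "v \<in> X ` {1..L}" "u < v" using cs by (auto simp: consec_def)
  obtain i where i: "1 \<le> i" "i \<le> L" "plt_x X L i = u" using plt_x_onto[OF inj uv(1)] by blast
  obtain m where m: "1 \<le> m" "m \<le> L" "plt_x X L m = v" using plt_x_onto[OF inj uv(2)] by blast
  have "i < m" using plt_x_mono[OF inj, of m i] i m uv(3) by (metis not_le)
  have "m = Suc i"
  proof (rule ccontr)
    assume "m \<noteq> Suc i"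
    hence "Suc i < m" using \<open>i < m\<close> by simp
    hence "u < plt_x X L (Suc i)" "plt_x X L (Suc i) < v"
      using plt_x_strict_mono[OF inj, of i "Suc i"] plt_x_strict_mono[OF inj, of "Suc i" m] i m by auto
    moreover have "plt_x X L (Suc i) \<in> X ` {1..L}" using plt_x_in[OF inj] \<open>Suc i < m\<close> m by auto
    ultimately show False using cs by (auto simp: consec_def)
  qed
  thus ?thesis using i m by (intro bexI[of _ m]) auto
qed

lemma plt_x_index:
  assumes inj: "inj_on X {1..L}" and j: "j \<in> {2..L}"
  shows "(THE j'. j' \<in> {2..L} \<and> plt_x X L j' = plt_x X L j) = j"
proof (rule the_equality)
  fix j' assume "j' \<in> {2..L} \<and> plt_x X L j' = plt_x X L j"
  thus "j' = j"
    using plt_x_strict_mono[OF inj, of j' j] plt_x_strict_mono[OF inj, of j j'] j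
    by (metis atLeastAtMost_iff less_irrefl linorder_neqE_nat one_le_numeral order_trans)
qed (use j in auto)

section \<open>Estimates for the characteristic and the new trial point\<close>

lemma characteristic_bounds:
  fixes m c zj zi d mu \<xi> M r :: real
  assumes c: "c = \<bar>zj - zi\<bar>" and d: "0 < d" and mu: "\<xi> \<le> mu" "\<xi> > 0" "c \<le> mu * d" "mu \<le> M"
    and r: "r > 1" and m: "m = r * mu * d"
  shows "(r - 1) * \<xi> * d - 2 * min zj zi \<le> m + (zj - zi)\<^sup>2 / m - (zj + zi)"
    and "m + (zj - zi)\<^sup>2 / m - (zj + zi) \<le> r * M * d - 2 * min zj zi"
proof -
  have mud: "mu * d > 0" using mu d by simp
  have m0: "m > 0" using m r mud by (simp add: mult.assoc)
  have "c \<le> m" using mu(3) mult_right_mono[of 1 r "mu * d"] r mud m by (simp add: mult.assoc)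
  hence "c * c \<le> c * m" using c by (intro mult_left_mono) auto
  moreover have "(zj - zi)\<^sup>2 = c * c" using c by (simp add: power2_eq_square)
  ultimately have sq: "0 \<le> (zj - zi)\<^sup>2 / m" "(zj - zi)\<^sup>2 / m \<le> c"
    using m0 by (simp_all add: divide_le_eq mult.commute)
  have zz: "zj + zi = 2 * min zj zi + c" using c by (auto simp: min_def abs_if)
  have "(r - 1) * \<xi> * d \<le> (r - 1) * mu * d" using r mu d by (intro mult_right_mono mult_left_mono) auto
  also have "\<dots> = m - mu * d" using m by (simp add: algebra_simps)
  finally have lo: "(r - 1) * \<xi> * d \<le> m - c" using mu(3) by simp
  have "m \<le> r * M * d" using m d r mu by (simp add: mult_right_mono)
  thus "(r - 1) * \<xi> * d - 2 * min zj zi \<le> m + (zj - zi)\<^sup>2 / m - (zj + zi)"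
    and "m + (zj - zi)\<^sup>2 / m - (zj + zi) \<le> r * M * d - 2 * min zj zi"
    using lo sq zz by simp_all
qed

lemma new_point_central:
  fixes a b c mu r s y :: real
  assumes ab: "a < b" and N: "N \<ge> 1"
    and mu: "mu > 0" and c: "0 \<le> c" "c \<le> mu * (b - a) powr (1 / real N)" and r: "r > 1"
    and s: "\<bar>s\<bar> \<le> 1" and y: "y = (a + b) / 2 - (1 / (2 * r)) * (c / mu) ^ N * s"
  shows "a + (1 - 1 / r) / 2 * (b - a) \<le> y" "y \<le> b - (1 - 1 / r) / 2 * (b - a)"
proof -
  have "c / mu \<le> (b - a) powr (1 / real N)" using c mu by (simp add: divide_le_eq mult.commute)
  hence "(c / mu) ^ N \<le> ((b - a) powr (1 / real N)) ^ N" using c mu by (intro power_mono) auto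
  also have "\<dots> = b - a" using root_pow_cancel[OF N, of "b - a"] ab by simp
  finally have cN: "(c / mu) ^ N \<le> b - a" .
  define dev where "dev = (1 / (2 * r)) * (c / mu) ^ N * s"
  have "\<bar>dev\<bar> = (1 / (2 * r)) * (c / mu) ^ N * \<bar>s\<bar>" using r c mu by (simp add: dev_def abs_mult)
  also have "\<dots> \<le> (1 / (2 * r)) * (c / mu) ^ N" by (rule mult_left_le) (use r c mu s in auto)
  also have "\<dots> \<le> (1 / (2 * r)) * (b - a)" using mult_left_mono[OF cN, of "1 / (2 * r)"] r by simp
  finally have "\<bar>dev\<bar> \<le> (b - a) / (2 * r)" by simp
  moreover have "(1 - 1 / r) / 2 * (b - a) = (b - a) / 2 - (b - a) / (2 * r)" using r by (simp add: field_simps)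
  moreover have "y = (a + b) / 2 - dev" using y by (simp add: dev_def)
  ultimately show "a + (1 - 1 / r) / 2 * (b - a) \<le> y" "y \<le> b - (1 - 1 / r) / 2 * (b - a)"
    by (simp_all add: abs_le_iff field_simps)
qed

lemma plt_mu_bounds:
  fixes f :: "real \<Rightarrow> real"
  assumes holder: "\<forall>x\<in>{0..1}. \<forall>y\<in>{0..1}. \<bar>f x - f y\<bar> \<le> H * \<bar>x - y\<bar> powr (1 / real N)"
    and inj: "inj_on X {1..L}" and unit: "X ` {1..L} \<subseteq> {0..1}" and j: "j \<in> {2..L}"
  shows "\<xi> \<le> plt_mu f N \<xi> X L j" "plt_slope f N X L j \<le> plt_mu f N \<xi> X L j"
    "plt_mu f N \<xi> X L j \<le> max H \<xi>" "plt_d N X L j > 0"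
proof -
  have gap: "plt_x X L (i - 1) < plt_x X L i" if "i \<in> {2..L}" for i
    using plt_x_strict_mono[OF inj, of "i - 1" i] that by auto
  have dpos: "plt_d N X L i > 0" if "i \<in> {2..L}" for i
    using gap[OF that] by (simp add: plt_d_def)
  have slope: "0 \<le> plt_slope f N X L i" "plt_slope f N X L i \<le> H" if i: "i \<in> {2..L}" for i
  proof -
    have "plt_x X L i \<in> {0..1}" "plt_x X L (i - 1) \<in> {0..1}"
      using plt_x_unit[OF inj unit] i by auto
    hence "\<bar>f (plt_x X L i) - f (plt_x X L (i - 1))\<bar>
        \<le> H * \<bar>plt_x X L i - plt_x X L (i - 1)\<bar> powr (1 / real N)"
      using holder by blast
    hence "\<bar>plt_z f X L i - plt_z f X L (i - 1)\<bar> \<le> H * plt_d N X L i"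
      using gap[OF i] by (simp add: plt_z_def plt_d_def)
    thus "plt_slope f N X L i \<le> H" using dpos[OF i] by (simp add: plt_slope_def divide_le_eq mult.commute)
    show "0 \<le> plt_slope f N X L i" using dpos[OF i] by (simp add: plt_slope_def)
  qed
  define A where "A = {j - 1..j + 1} \<inter> {2..L}"
  have A: "finite A" "j \<in> A" "A \<subseteq> {2..L}" using j by (auto simp: A_def)
  have lam: "plt_slope f N X L j \<le> plt_lambda f N X L j" "plt_lambda f N X L j \<le> H"
    unfolding plt_lambda_def A_def[symmetric]
  proof -
    show "plt_slope f N X L j \<le> Max (plt_slope f N X L ` A)" using A by (intro Max_ge) auto
    show "Max (plt_slope f N X L ` A) \<le> H" using A slope(2) by (subst Max_le_iff) auto
  qed
  have glob: "plt_slope f N X L j \<le> plt_mu_glob f N X L" "plt_mu_glob f N X L \<le> H"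
    unfolding plt_mu_glob_def using j slope(2) by (auto intro: Max_ge)
  have xm: "plt_x X L j - plt_x X L (j - 1) \<le> plt_Xmax X L"
    unfolding plt_Xmax_def using j by (intro Max_ge) auto
  hence "plt_d N X L j \<le> plt_Xmax X L powr (1 / real N)"
    unfolding plt_d_def using gap[OF j] by (intro powr_mono2) auto
  moreover have "plt_Xmax X L powr (1 / real N) > 0" using xm gap[OF j] by simp
  moreover have "plt_mu_glob f N X L \<ge> 0" using glob(1) slope(1)[OF j] by linarith
  ultimately have "plt_gamma f N X L j \<le> plt_mu_glob f N X L"
    by (simp add: plt_gamma_def divide_le_eq mult_left_mono)
  thus "\<xi> \<le> plt_mu f N \<xi> X L j" "plt_slope f N X L j \<le> plt_mu f N \<xi> X L j"
    "plt_mu f N \<xi> X L j \<le> max H \<xi>" "plt_d N X L j > 0"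
    using lam glob dpos[OF j] by (auto simp: plt_mu_def le_max_iff_disj)
qed

lemma plt_R_bounds:
  fixes f :: "real \<Rightarrow> real"
  assumes r: "r > 1" and xi: "\<xi> > 0"
    and holder: "\<forall>x\<in>{0..1}. \<forall>y\<in>{0..1}. \<bar>f x - f y\<bar> \<le> H * \<bar>x - y\<bar> powr (1 / real N)"
    and inj: "inj_on X {1..L}" and unit: "X ` {1..L} \<subseteq> {0..1}" and j: "j \<in> {2..L}"
  defines "u \<equiv> plt_x X L (j - 1)" and "v \<equiv> plt_x X L j"
  shows "(r - 1) * \<xi> * (v - u) powr (1 / real N) - 2 * min (f u) (f v) \<le> plt_R f N r \<xi> X L j"
    "plt_R f N r \<xi> X L j \<le> r * max H \<xi> * (v - u) powr (1 / real N) - 2 * min (f u) (f v)"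
proof -
  note mu = plt_mu_bounds[OF holder inj unit j]
  define c where "c = \<bar>plt_z f X L j - plt_z f X L (j - 1)\<bar>"
  have "c \<le> plt_mu f N \<xi> X L j * plt_d N X L j"
    using mu(2,4) by (simp add: plt_slope_def c_def divide_le_eq)
  note bounds = characteristic_bounds[OF c_def mu(4) mu(1) xi this mu(3) r refl]
  show "(r - 1) * \<xi> * (v - u) powr (1 / real N) - 2 * min (f u) (f v) \<le> plt_R f N r \<xi> X L j"
    using bounds(1) by (simp add: plt_R_def Let_def plt_z_def plt_d_def u_def v_def min.commute)
  show "plt_R f N r \<xi> X L j \<le> r * max H \<xi> * (v - u) powr (1 / real N) - 2 * min (f u) (f v)"
    using bounds(2) by (simp add: plt_R_def Let_def plt_z_def plt_d_def u_def v_def min.commute)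
qed

lemma plt_new_central:
  fixes f :: "real \<Rightarrow> real"
  assumes N: "N \<ge> 1" and r: "r > 1" and xi: "\<xi> > 0"
    and holder: "\<forall>x\<in>{0..1}. \<forall>y\<in>{0..1}. \<bar>f x - f y\<bar> \<le> H * \<bar>x - y\<bar> powr (1 / real N)"
    and inj: "inj_on X {1..L}" and unit: "X ` {1..L} \<subseteq> {0..1}" and j: "j \<in> {2..L}"
  defines "u \<equiv> plt_x X L (j - 1)" and "v \<equiv> plt_x X L j"
  shows "u + (1 - 1 / r) / 2 * (v - u) \<le> plt_new f N r \<xi> X L j"
    "plt_new f N r \<xi> X L j \<le> v - (1 - 1 / r) / 2 * (v - u)"
proof -
  note mu = plt_mu_bounds[OF holder inj unit j]
  define c where "c = \<bar>plt_z f X L j - plt_z f X L (j - 1)\<bar>"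
  have "c \<le> plt_mu f N \<xi> X L j * (v - u) powr (1 / real N)"
    using mu(2,4) by (simp add: plt_slope_def c_def divide_le_eq plt_d_def u_def v_def)
  moreover have "u < v" using plt_x_strict_mono[OF inj, of "j - 1" j] j by (auto simp: u_def v_def)
  moreover have "plt_mu f N \<xi> X L j > 0" using mu(1) xi by (meson less_le_trans)
  moreover have "\<bar>sgn (plt_z f X L j - plt_z f X L (j - 1))\<bar> \<le> 1" by (simp add: sgn_if)
  ultimately show "u + (1 - 1 / r) / 2 * (v - u) \<le> plt_new f N r \<xi> X L j"
    "plt_new f N r \<xi> X L j \<le> v - (1 - 1 / r) / 2 * (v - u)"
    using new_point_central[OF _ N _ _ _ r, of u v] by (auto simp: plt_new_def c_def u_def v_def)
qed

lemma insert_interior_points: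
  assumes inj: "inj_on X {1..L}" and unit: "X ` {1..L} \<subseteq> {0..1}"
    and t: "inj_on t {1..P}" "t ` {1..P} \<subseteq> {2..L}"
    and inside: "\<And>k. k \<in> {1..P} \<Longrightarrow> plt_x X L (t k - 1) < X (L + k) \<and> X (L + k) < plt_x X L (t k)"
  shows "inj_on X {1..L + P}" "X ` {1..L + P} \<subseteq> {0..1}"
proof -
  have tk: "t k \<in> {2..L}" if "k \<in> {1..P}" for k using t(2) that by blast
  have fresh: "X (L + k) \<notin> X ` {1..L}" if "k \<in> {1..P}" for k
    using consec_outside[OF plt_x_consec[OF inj, of "t k"]] tk[OF that] inside[OF that] by fastforce
  have new_unit: "X (L + k) \<in> {0..1}" if "k \<in> {1..P}" for k
    using plt_x_unit[OF inj unit, of "t k - 1"] plt_x_unit[OF inj unit, of "t k"]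
      tk[OF that] inside[OF that] by fastforce
  have order: "X (L + k) < X (L + k')" if k: "k \<in> {1..P}" "k' \<in> {1..P}" "t k < t k'" for k k'
  proof -
    have "plt_x X L (t k) \<le> plt_x X L (t k' - 1)"
      using tk[OF k(1)] tk[OF k(2)] k(3) by (intro plt_x_mono[OF inj]) auto
    thus ?thesis using inside[OF k(1)] inside[OF k(2)] by linarith
  qed
  have "inj_on (\<lambda>k. X (L + k)) {1..P}"
  proof (rule inj_onI)
    fix k k' assume k: "k \<in> {1..P}" "k' \<in> {1..P}" and eq: "X (L + k) = X (L + k')"
    have "t k = t k'" using order[OF k] order[OF k(2,1)] eq by (metis less_irrefl linorder_neqE_nat)
    thus "k = k'" using inj_onD[OF t(1)] k by blast
  qed
  hence "inj_on X ((+) L ` {1..P})" by (intro inj_on_imageI) (simp add: comp_def)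
  moreover have new: "{L + 1..L + P} = (+) L ` {1..P}" by (simp add: add.commute)
  ultimately have new_inj: "inj_on X {L + 1..L + P}" by (simp only:)
  have new_pts: "X ` {L + 1..L + P} = (\<lambda>k. X (L + k)) ` {1..P}"
    unfolding new image_image ..
  have disjoint: "X ` {L + 1..L + P} \<inter> X ` {1..L} = {}" unfolding new_pts using fresh by blast
  have split: "{1..L + P} = {1..L} \<union> {L + 1..L + P}"
    and "{1..L} - {L + 1..L + P} = {1..L}" "{L + 1..L + P} - {1..L} = {L + 1..L + P}" by auto
  thus "inj_on X {1..L + P}" using inj new_inj disjoint by (simp add: inj_on_Un Int_commute)
  have "X ` {L + 1..L + P} \<subseteq> {0..1}" unfolding new_pts using new_unit by blast
  thus "X ` {1..L + P} \<subseteq> {0..1}" unfolding split image_Un using unit by blast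
qed

locale plt_run =
  fixes f :: "real \<Rightarrow> real" and N :: nat and H r \<xi> :: real and X :: "nat \<Rightarrow> real"
    and q p :: "nat \<Rightarrow> nat"
  assumes N: "N \<ge> 1" and H: "H > 0" and r: "r > 1" and xi: "\<xi> > 0"
    and holder: "\<forall>x\<in>{0..1}. \<forall>y\<in>{0..1}. \<bar>f x - f y\<bar> \<le> H * \<bar>x - y\<bar> powr (1 / real N)"
    and run: "PLT_run f N r \<xi> X q p"
begin

definition valid_selection :: "nat \<Rightarrow> (nat \<Rightarrow> nat) \<Rightarrow> bool" where
  "valid_selection l t \<longleftrightarrow> inj_on t {1..p (l + 1)} \<and> t ` {1..p (l + 1)} \<subseteq> {2..q l} \<and>
     (\<forall>k\<in>{1..p (l + 1)}. \<forall>k'\<in>{1..p (l + 1)}. k < k' \<longrightarrow>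
        plt_R f N r \<xi> X (q l) (t k') \<le> plt_R f N r \<xi> X (q l) (t k)) \<and>
     (\<forall>k\<in>{1..p (l + 1)}. \<forall>j\<in>{2..q l} - t ` {1..p (l + 1)}.
        plt_R f N r \<xi> X (q l) j \<le> plt_R f N r \<xi> X (q l) (t k)) \<and>
     (\<forall>k\<in>{1..p (l + 1)}. X (q l + k) = plt_new f N r \<xi> X (q l) (t k))"

definition sel :: "nat \<Rightarrow> nat \<Rightarrow> nat" where
  "sel l = (SOME t. valid_selection l t)"

lemma run_init: "q 1 > 1" "X 1 = 0" "X 2 = 1" "\<forall>i\<in>{3..q 1}. 0 < X i \<and> X i < 1" "inj_on X {1..q 1}"
  using run by (simp_all add: PLT_run_def)

lemma run_step:
  assumes "l \<ge> 1"
  shows "1 \<le> p (Suc l)" "q (Suc l) = q l + p (Suc l)" "valid_selection l (sel l)"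
proof -
  have "1 \<le> p (Suc l) \<and> q (Suc l) = q l + p (Suc l) \<and> (\<exists>t. valid_selection l t)"
    using run assms unfolding PLT_run_def valid_selection_def by simp
  thus "1 \<le> p (Suc l)" "q (Suc l) = q l + p (Suc l)" "valid_selection l (sel l)"
    unfolding sel_def using someI_ex[of "valid_selection l"] by auto
qed

lemma q_ge: "l \<ge> 1 \<Longrightarrow> q l \<ge> l + 1"
proof (induction l rule: nat_induct_at_least)
  case base thus ?case using run_init(1) by simp
next
  case (Suc n) thus ?case using run_step(1,2)[of n] by simp
qed

lemma q_mono: "1 \<le> l \<Longrightarrow> q l \<le> q (Suc l)"
  using run_step(2) by simp

lemma trials_distinct_unit:
  assumes "l \<ge> 1"
  shows "inj_on X {1..q l}" "X ` {1..q l} \<subseteq> {0..1}"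
proof -
  have "inj_on X {1..q l} \<and> X ` {1..q l} \<subseteq> {0..1}"
    using assms
  proof (induction l rule: nat_induct_at_least)
    case base
    have "X i \<in> {0..1}" if "i \<in> {1..q 1}" for i
    proof -
      have "i = 1 \<or> i = 2 \<or> i \<in> {3..q 1}" using that by auto
      thus ?thesis using run_init(2,3,4) by fastforce
    qed
    thus ?case using run_init(5) by auto
  next
    case (Suc l)
    define L t where "L = q l" and "t = sel l"
    have inj: "inj_on X {1..L}" and unit: "X ` {1..L} \<subseteq> {0..1}" using Suc.IH by (auto simp: L_def)
    have valid: "valid_selection l t" using run_step(3)[OF Suc.hyps] by (simp add: t_def)
    hence t: "inj_on t {1..p (Suc l)}" "t ` {1..p (Suc l)} \<subseteq> {2..L}"
      by (auto simp: valid_selection_def L_def)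
    have "plt_x X L (t k - 1) < X (L + k) \<and> X (L + k) < plt_x X L (t k)"
      if k: "k \<in> {1..p (Suc l)}" for k
    proof -
      have j: "t k \<in> {2..L}" using t(2) k by blast
      have "X (L + k) = plt_new f N r \<xi> X L (t k)"
        using valid k by (simp add: valid_selection_def L_def)
      moreover have "0 < (1 - 1 / r) / 2 * (plt_x X L (t k) - plt_x X L (t k - 1))"
      proof -
        have "plt_x X L (t k - 1) < plt_x X L (t k)"
          using plt_x_strict_mono[OF inj, of "t k - 1" "t k"] j by auto
        moreover have "0 < (1 - 1 / r) / 2" using r by (simp add: field_simps)
        ultimately show ?thesis by simp
      qed
      ultimately show ?thesis using plt_new_central[OF N r xi holder inj unit j] by linarith
    qed
    note step = insert_interior_points[OF inj unit t this]
    have "q (Suc l) = L + p (Suc l)" using run_step(2)[OF Suc.hyps] by (simp add: L_def)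
    thus ?case using step by simp
  qed
  thus "inj_on X {1..q l}" "X ` {1..q l} \<subseteq> {0..1}" by auto
qed

subsection \<open>PLT as an interval-refinement scheme\<close>

text \<open>Step m of the abstract scheme is iteration m+1 of PLT: the current trial points,
  the intervals selected for refinement, and their characteristics (an interval is
  identified by its right end).\<close>
definition pts :: "nat \<Rightarrow> real set" where
  "pts m = X ` {1..q (Suc m)}"

definition chosen :: "nat \<Rightarrow> (real \<times> real) set" where
  "chosen m = (\<lambda>k. (plt_x X (q (Suc m)) (sel (Suc m) k - 1), plt_x X (q (Suc m)) (sel (Suc m) k)))
     ` {1..p (Suc (Suc m))}"

definition char :: "nat \<Rightarrow> real \<Rightarrow> real \<Rightarrow> real" where
  "char m u v = plt_R f N r \<xi> X (q (Suc m)) (THE j. j \<in> {2..q (Suc m)} \<and> plt_x X (q (Suc m)) j = v)"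

lemma selection:
  fixes m :: nat
  defines "L \<equiv> q (Suc m)" and "P \<equiv> p (Suc (Suc m))" and "t \<equiv> sel (Suc m)"
  shows "t ` {1..P} \<subseteq> {2..L}"
    and "\<And>k j. k \<in> {1..P} \<Longrightarrow> j \<in> {2..L} - t ` {1..P} \<Longrightarrow>
           plt_R f N r \<xi> X L j \<le> plt_R f N r \<xi> X L (t k)"
    and "\<And>k. k \<in> {1..P} \<Longrightarrow> X (L + k) = plt_new f N r \<xi> X L (t k)"
    and "q (Suc (Suc m)) = L + P"
  using run_step[of "Suc m"] unfolding valid_selection_def L_def P_def t_def by auto

lemma consec_pts:
  "consec (pts m) u v \<longleftrightarrow>
     (\<exists>j\<in>{2..q (Suc m)}. u = plt_x X (q (Suc m)) (j - 1) \<and> v = plt_x X (q (Suc m)) j)"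
  using consec_plt_x[OF trials_distinct_unit(1)] plt_x_consec[OF trials_distinct_unit(1)]
  unfolding pts_def by fastforce

lemma char_index:
  assumes "j \<in> {2..q (Suc m)}"
  shows "char m (plt_x X (q (Suc m)) (j - 1)) (plt_x X (q (Suc m)) j) = plt_R f N r \<xi> X (q (Suc m)) j"
  unfolding char_def using plt_x_index[OF trials_distinct_unit(1) assms] by simp

lemma chosen_index: "(u, v) \<in> chosen m \<longleftrightarrow> (\<exists>k\<in>{1..p (Suc (Suc m))}.
    u = plt_x X (q (Suc m)) (sel (Suc m) k - 1) \<and> v = plt_x X (q (Suc m)) (sel (Suc m) k))"
  unfolding chosen_def by auto

lemma pts_props:
  "finite (pts m)" "pts m \<subseteq> {0..1}" "0 \<in> pts m" "1 \<in> pts m" "pts m \<subseteq> pts (Suc m)"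
proof -
  have q2: "2 \<le> q (Suc m)" using q_ge[of "Suc m"] by simp
  show "finite (pts m)" by (simp add: pts_def)
  show "pts m \<subseteq> {0..1}" using trials_distinct_unit(2) by (simp add: pts_def)
  show "0 \<in> pts m" "1 \<in> pts m" using run_init(2,3) q2 unfolding pts_def by (auto intro!: image_eqI)
  show "pts m \<subseteq> pts (Suc m)" using q_mono[of "Suc m"] by (auto simp: pts_def)
qed

lemma chosen_consec_pts: "(u, v) \<in> chosen m \<Longrightarrow> consec (pts m) u v"
  using selection(1)[of m] unfolding chosen_index consec_pts by blast

lemma char_bounds:
  assumes "consec (pts m) u v"
  shows "(r - 1) * \<xi> * (v - u) powr (1 / real N) - 2 * min (f u) (f v) \<le> char m u v"
    and "char m u v \<le> r * max H \<xi> * (v - u) powr (1 / real N) - 2 * min (f u) (f v)"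
proof -
  obtain j where j: "j \<in> {2..q (Suc m)}" "u = plt_x X (q (Suc m)) (j - 1)" "v = plt_x X (q (Suc m)) j"
    using assms unfolding consec_pts by blast
  note bounds = plt_R_bounds[OF r xi holder trials_distinct_unit j(1)]
  show "(r - 1) * \<xi> * (v - u) powr (1 / real N) - 2 * min (f u) (f v) \<le> char m u v"
    and "char m u v \<le> r * max H \<xi> * (v - u) powr (1 / real N) - 2 * min (f u) (f v)"
    using bounds char_index[OF j(1)] unfolding j(2,3) by simp_all
qed

lemma char_maximal_pts:
  assumes uv: "(u, v) \<in> chosen m" and ab: "consec (pts m) a b" "(a, b) \<notin> chosen m"
  shows "char m a b \<le> char m u v"
proof -
  obtain k where k: "k \<in> {1..p (Suc (Suc m))}" "u = plt_x X (q (Suc m)) (sel (Suc m) k - 1)"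
    "v = plt_x X (q (Suc m)) (sel (Suc m) k)" using uv unfolding chosen_index by blast
  obtain j where j: "j \<in> {2..q (Suc m)}" "a = plt_x X (q (Suc m)) (j - 1)" "b = plt_x X (q (Suc m)) j"
    using ab(1) unfolding consec_pts by blast
  have "j \<notin> sel (Suc m) ` {1..p (Suc (Suc m))}" using ab(2) j unfolding chosen_index by blast
  hence "plt_R f N r \<xi> X (q (Suc m)) j \<le> plt_R f N r \<xi> X (q (Suc m)) (sel (Suc m) k)"
    using selection(2) k(1) j(1) by blast
  thus ?thesis using char_index j char_index[of "sel (Suc m) k"] selection(1) k by force
qed

lemma new_point_of_chosen:
  fixes m k :: nat
  assumes "k \<in> {1..p (Suc (Suc m))}"
  defines "j \<equiv> sel (Suc m) k"
  shows "X (q (Suc m) + k) \<in> pts (Suc m)"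
    "plt_x X (q (Suc m)) (j - 1) + (1 - 1 / r) / 2 * (plt_x X (q (Suc m)) j - plt_x X (q (Suc m)) (j - 1))
       \<le> X (q (Suc m) + k)"
    "X (q (Suc m) + k)
       \<le> plt_x X (q (Suc m)) j - (1 - 1 / r) / 2 * (plt_x X (q (Suc m)) j - plt_x X (q (Suc m)) (j - 1))"
proof -
  have j: "j \<in> {2..q (Suc m)}" using selection(1) assms by blast
  show "X (q (Suc m) + k) \<in> pts (Suc m)" using selection(4) assms by (auto simp: pts_def)
  show "plt_x X (q (Suc m)) (j - 1) + (1 - 1 / r) / 2 * (plt_x X (q (Suc m)) j - plt_x X (q (Suc m)) (j - 1))
       \<le> X (q (Suc m) + k)"
    "X (q (Suc m) + k)
       \<le> plt_x X (q (Suc m)) j - (1 - 1 / r) / 2 * (plt_x X (q (Suc m)) j - plt_x X (q (Suc m)) (j - 1))"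
    using plt_new_central[OF N r xi holder trials_distinct_unit j] selection(3)[OF assms(1)]
    by (simp_all add: j_def)
qed

lemma new_in_chosen_pts:
  assumes "(u, v) \<in> chosen m"
  shows "\<exists>y\<in>pts (Suc m). u + (1 - 1 / r) / 2 * (v - u) \<le> y \<and> y \<le> v - (1 - 1 / r) / 2 * (v - u)"
  using assms new_point_of_chosen unfolding chosen_index by blast

lemma new_from_chosen_pts:
  assumes "y \<in> pts (Suc m)" "y \<notin> pts m"
  shows "\<exists>(u, v)\<in>chosen m. u + (1 - 1 / r) / 2 * (v - u) \<le> y \<and> y \<le> v - (1 - 1 / r) / 2 * (v - u)"
proof -
  obtain i where i: "i \<in> {1..q (Suc (Suc m))}" "y = X i" using assms(1) by (auto simp: pts_def)
  define k where "k = i - q (Suc m)"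
  have "i \<notin> {1..q (Suc m)}" using assms(2) i(2) by (auto simp: pts_def)
  hence "q (Suc m) < i" using i(1) by auto
  hence k: "k \<in> {1..p (Suc (Suc m))}" "q (Suc m) + k = i"
    using i(1) selection(4)[of m] unfolding k_def by auto
  have y: "y = X (q (Suc m) + k)" using k(2) i(2) by simp
  have "(plt_x X (q (Suc m)) (sel (Suc m) k - 1), plt_x X (q (Suc m)) (sel (Suc m) k)) \<in> chosen m"
    using k(1) unfolding chosen_def by blast
  thus ?thesis using new_point_of_chosen(2,3)[OF k(1)] unfolding y by (intro bexI) auto
qed

end

locale plt_bounded = plt_run +
  fixes Q :: nat
  assumes p_bound: "\<forall>l>1. p l \<le> Q"

sublocale plt_bounded \<subseteq> scheme: interval_refinement pts chosen char f N H
  "(1 - 1 / r) / 2" "(r - 1) * \<xi>" "r * max H \<xi>" Q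
proof unfold_locales
  fix m l :: nat and u v a b y :: real
  show "N \<ge> 1" "H > 0" using N H .
  show "0 < (1 - 1 / r) / 2" "(1 - 1 / r) / 2 < 1" using r by (simp_all add: field_simps)
  show "(r - 1) * \<xi> > 0" "r * max H \<xi> \<ge> 0" using r xi H by simp_all
  show "\<forall>x\<in>{0..1}. \<forall>y\<in>{0..1}. \<bar>f x - f y\<bar> \<le> H * \<bar>x - y\<bar> powr (1 / real N)" by (rule holder)
  show "finite (pts l)" "pts l \<subseteq> {0..1}" "0 \<in> pts l" "1 \<in> pts l" "pts l \<subseteq> pts (Suc l)"
    by (rule pts_props)+
  show "(u, v) \<in> chosen l \<Longrightarrow> consec (pts l) u v" by (rule chosen_consec_pts)
  have "card (chosen l) \<le> card {1..p (Suc (Suc l))}" unfolding chosen_def by (rule card_image_le) simp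
  also have "\<dots> \<le> Q" using p_bound by simp
  finally show "card (chosen l) \<le> Q" .
  show "consec (pts l) u v \<Longrightarrow>
      (r - 1) * \<xi> * (v - u) powr (1 / real N) - 2 * min (f u) (f v) \<le> char l u v"
    by (rule char_bounds(1))
  show "consec (pts l) u v \<Longrightarrow>
      char l u v \<le> r * max H \<xi> * (v - u) powr (1 / real N) - 2 * min (f u) (f v)"
    by (rule char_bounds(2))
  show "(u, v) \<in> chosen l \<Longrightarrow> consec (pts l) a b \<Longrightarrow> (a, b) \<notin> chosen l \<Longrightarrow>
      char l a b \<le> char l u v" by (rule char_maximal_pts)
  show "(u, v) \<in> chosen l \<Longrightarrow>
      \<exists>y\<in>pts (Suc l). u + (1 - 1 / r) / 2 * (v - u) \<le> y \<and> y \<le> v - (1 - 1 / r) / 2 * (v - u)"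
    by (rule new_in_chosen_pts)
  show "y \<in> pts (Suc l) \<Longrightarrow> y \<notin> pts l \<Longrightarrow>
      \<exists>(u, v)\<in>chosen l. u + (1 - 1 / r) / 2 * (v - u) \<le> y \<and> y \<le> v - (1 - 1 / r) / 2 * (v - u)"
    by (rule new_from_chosen_pts)
qed

context plt_run
begin

lemma X_in_pts: "1 \<le> k \<Longrightarrow> X k \<in> pts k"
  using q_ge[of "Suc k"] by (auto simp: pts_def)

lemma union_pts: "(\<Union>m. pts m) = X ` {k. 1 \<le> k}"
  using X_in_pts by (auto simp: pts_def)

lemma X_unit: "1 \<le> k \<Longrightarrow> X k \<in> {0..1}"
  using X_in_pts pts_props(2) by blast

lemma X_inj: "inj_on X {k. 1 \<le> k}"
proof (rule inj_onI)
  fix a b assume ab: "a \<in> {k. 1 \<le> k}" "b \<in> {k. 1 \<le> k}" "X a = X b"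
  define m where "m = max a b"
  have m: "1 \<le> m" "a \<le> m" "b \<le> m" using ab by (auto simp: m_def)
  hence "a \<in> {1..q m}" "b \<in> {1..q m}" using q_ge[of m] ab by auto
  thus "a = b" using inj_onD[OF trials_distinct_unit(1)[OF m(1)] ab(3)] by blast
qed

lemma limpt_of_seq_limit_point:
  assumes "seq_limit_point X x"
  shows "limpt pts x"
  unfolding limpt_def
proof (intro allI impI)
  fix \<epsilon> :: real assume "\<epsilon> > 0"
  obtain \<sigma> where \<sigma>: "strict_mono \<sigma>" "\<forall>n. \<sigma> n \<ge> 1" "(\<lambda>n. X (\<sigma> n)) \<longlonglongrightarrow> x"
    using assms by (auto simp: seq_limit_point_def)
  obtain n0 where n0: "\<forall>n\<ge>n0. \<bar>X (\<sigma> n) - x\<bar> < \<epsilon>"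
    using \<sigma>(3) \<open>\<epsilon> > 0\<close> unfolding LIMSEQ_iff by auto
  have "inj_on (\<lambda>n. X (\<sigma> n)) {n0..}"
  proof (rule inj_onI)
    fix n n' assume "X (\<sigma> n) = X (\<sigma> n')"
    hence "\<sigma> n = \<sigma> n'" using inj_onD[OF X_inj] \<sigma>(2) by simp
    thus "n = n'" using strict_mono_eq[OF \<sigma>(1)] by simp
  qed
  hence "infinite ((\<lambda>n. X (\<sigma> n)) ` {n0..})" using infinite_Ici finite_imageD by blast
  moreover have "(\<lambda>n. X (\<sigma> n)) ` {n0..} \<subseteq> {y \<in> (\<Union>l. pts l). \<bar>y - x\<bar> < \<epsilon>}"
    using n0 \<sigma>(2) union_pts by auto
  ultimately show "infinite {y \<in> (\<Union>l. pts l). \<bar>y - x\<bar> < \<epsilon>}" using finite_subset by blast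
qed

end

context plt_bounded
begin

lemma values_above_limit:
  assumes "seq_limit_point X x" "1 \<le> k"
  shows "f x \<le> f (X k)"
  using scheme.values_above_limit_value[OF limpt_of_seq_limit_point X_in_pts] assms by blast

text \<open>(iii): f takes the same value at all limit points, since by (iv) and continuity
  f x1 \<le> f x2 for any two of them.\<close>
lemma limit_values_equal:
  assumes "seq_limit_point X x1" "seq_limit_point X x2"
  shows "f x1 = f x2"
proof -
  have cont: "continuous_on {0..1} f" by (rule holder_continuous[OF N H holder])
  have le: "f x \<le> f x'" if x: "seq_limit_point X x" and x': "seq_limit_point X x'" for x x'
  proof -
    obtain \<sigma> where \<sigma>: "\<forall>n. \<sigma> n \<ge> 1" "(\<lambda>n. X (\<sigma> n)) \<longlonglongrightarrow> x'"
      using x' by (auto simp: seq_limit_point_def)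
    have "x' \<in> {0..1}" using scheme.limpt_in_unit[OF limpt_of_seq_limit_point[OF x']] .
    hence "(\<lambda>n. f (X (\<sigma> n))) \<longlonglongrightarrow> f x'"
      using continuous_on_tendsto_compose[OF cont \<sigma>(2)] X_unit \<sigma>(1) by simp
    thus ?thesis using values_above_limit[OF x] \<sigma>(1) by (intro LIMSEQ_le_const) auto
  qed
  show ?thesis using le[OF assms] le[OF assms(2,1)] by simp
qed

lemma trials_right_of_limit:
  assumes "seq_limit_point X x" "x < 1" "\<epsilon> > 0"
  shows "\<exists>k\<ge>1. x < X k \<and> X k < x + \<epsilon>"
  using scheme.points_right_of_limit[OF limpt_of_seq_limit_point assms(2,3)] assms(1) union_pts
  by force

lemma trials_left_of_limit:
  assumes "seq_limit_point X x" "0 < x" "\<epsilon> > 0"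
  shows "\<exists>k\<ge>1. x - \<epsilon> < X k \<and> X k < x"
  using scheme.points_left_of_limit[OF limpt_of_seq_limit_point assms(2,3)] assms(1) union_pts
  by force

text \<open>(ii): with finitely many local extrema, a limit point is a local minimizer, since
  trial points (all with values \<ge> f at the limit point) approach it from both sides.\<close>
lemma limit_is_local_min:
  assumes "seq_limit_point X x" and "finite {x. loc_min_01 f x \<or> loc_max_01 f x}"
  shows "loc_min_01 f x"
proof (rule local_min_from_sides[OF holder_continuous[OF N H holder] assms(2)])
  show "x \<in> {0..1}" using scheme.limpt_in_unit[OF limpt_of_seq_limit_point[OF assms(1)]] .
  show "\<exists>w. x < w \<and> w < x + \<epsilon> \<and> f x \<le> f w" if "x < 1" "\<epsilon> > 0" for \<epsilon>
    using trials_right_of_limit[OF assms(1) that] values_above_limit[OF assms(1)] by blast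
  show "\<exists>w. x - \<epsilon> < w \<and> w < x \<and> f x \<le> f w" if "0 < x" "\<epsilon> > 0" for \<epsilon>
    using trials_left_of_limit[OF assms(1) that] values_above_limit[OF assms(1)] by blast
qed

end

theorem theorem1:
  fixes f :: "real \<Rightarrow> real" and N :: nat and H r \<xi> :: real
    and X :: "nat \<Rightarrow> real" and q p :: "nat \<Rightarrow> nat" and Q :: nat and xbar :: real
  assumes N: "N \<ge> 1" and H: "H > 0" and r: "r > 1" and xi: "\<xi> > 0"
    and holder: "\<forall>x'\<in>{0..1}. \<forall>x''\<in>{0..1}. \<bar>f x' - f x''\<bar> \<le> H * \<bar>x' - x''\<bar> powr (1 / real N)"
    and run: "PLT_run f N r \<xi> X q p"
    and pQ: "\<forall>l>1. p l \<le> Q"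
    and lim: "seq_limit_point X xbar"
  shows "(0 < xbar \<and> xbar < 1 \<longrightarrow>
            (\<exists>\<sigma>. strict_mono \<sigma> \<and> (\<forall>n. \<sigma> n \<ge> 1) \<and> (\<forall>n. X (\<sigma> n) < xbar) \<and>
                 (\<lambda>n. X (\<sigma> n)) \<longlonglongrightarrow> xbar) \<and>
            (\<exists>\<sigma>. strict_mono \<sigma> \<and> (\<forall>n. \<sigma> n \<ge> 1) \<and> (\<forall>n. X (\<sigma> n) > xbar) \<and>
                 (\<lambda>n. X (\<sigma> n)) \<longlonglongrightarrow> xbar))
       \<and> (finite {x. loc_min_01 f x \<or> loc_max_01 f x} \<longrightarrow> loc_min_01 f xbar)
       \<and> (\<forall>xhat. seq_limit_point X xhat \<longrightarrow> f xbar = f xhat)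
       \<and> (\<forall>k\<ge>1. f (X k) \<ge> f xbar)"
proof -
  interpret plt_bounded f N H r \<xi> X q p Q
    using N H r xi holder run pQ by unfold_locales
  have two_sided: "(\<exists>\<sigma>. strict_mono \<sigma> \<and> (\<forall>n. \<sigma> n \<ge> 1) \<and> (\<forall>n. X (\<sigma> n) < xbar) \<and>
                 (\<lambda>n. X (\<sigma> n)) \<longlonglongrightarrow> xbar) \<and>
            (\<exists>\<sigma>. strict_mono \<sigma> \<and> (\<forall>n. \<sigma> n \<ge> 1) \<and> (\<forall>n. X (\<sigma> n) > xbar) \<and>
                 (\<lambda>n. X (\<sigma> n)) \<longlonglongrightarrow> xbar)" if "0 < xbar" "xbar < 1"
    using subseq_from_left[OF trials_left_of_limit[OF lim that(1)]]
      subseq_from_right[OF trials_right_of_limit[OF lim that(2)]] by blast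
  show ?thesis
    using two_sided limit_is_local_min[OF lim] limit_values_equal[OF lim] values_above_limit[OF lim]
    by blast
qed

end
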